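(* Let $F$ be a finite field of odd characteristic in which $-1$ is not a square, let $z,z'\in F$ with $z\neq z'$, and let $g_z,g_{z'}:F^3\to\mathbb{C}$ be functions supported on the planes $\{x_3=z\}$ and $\{x_3=z'\}$ respectively, each $\sim1$ on its support, with $G_z=\{\underline{x}\in F^2:g_z(\underline{x},z)\ne0\}$ and $G_{z'}=\{\underline{x}\in F^2:g_{z'}(\underline{x},z')\ne0\}$. Then $$\big\|(g_z*K)\,(g_{z'}*K)\big\|_{L^2(F^3)}^2 \lesssim |F|^{-1}|G_z|\,|G_{z'}| + |F|^{-2}\,\mathcal{B}(G_z,G_{z'}),$$ where $\mathcal{B}(A,B):=\min\{\mathcal{T}(A,B),\ |F|\,(\mathcal{R}(A)\mathcal{R}(B))^{1/2}\}$.
   Context: $e:(F,+)\to\mathbb{C}^\times$ is a fixed nontrivial additive character; $x\cdot y=\sum_i x_iy_i$; points of $F^3$ are $x=(\underline{x},x_3)$. $P=\{(\underline{x},\underline{x}\cdot\underline{x}):\underline{x}\in F^2\}$. $F^3$ carries counting measure, $(h_1*h_2)(x)=\sum_y h_1(y)h_2(x-y)$. $(d\sigma)^{\vee}(x)=|F|^{-2}\sum_{\xi\in P}e(x\cdot\xi)$, $\delta$ the indicator of $0$, $K:=(d\sigma)^{\vee}-\delta$. "$h\sim1$ on its support" means $\tfrac12\le|h|\le2$ wherever $h\ne0$. For $x_0,x_1,x_2\in F^2$, $(x_0,x_1,x_2)$ is a corner if $(x_1-x_0)\cdot(x_2-x_1)=0$; $(x_0,x_1,x_2,x_3)\in(F^2)^4$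 is a rectangle if $(x_i,x_{i+1},x_{i+2})$ is a corner for each $i\in\{0,1,2,3\}$, indices mod 4; $\mathcal{R}(A)$ is the number of rectangles in $A^4$. A quadruple $(x_1,x_2,x_3,x_4)$ in $F^2$ is a trapezoid if $x_1-x_2=\lambda(x_3-x_4)$ for some $\lambda\in F$; $\mathcal{T}(A,B)$ is the number of trapezoids with $x_1,x_2\in A$, $x_3,x_4\in B$. $X\lesssim Y$ means $X\le CY$ with $C$ absolute. *)

theory Defs
  imports "HOL-Algebra.Ring" "HOL-Algebra.Ring_Divisibility" "HOL-Analysis.Analysis"
begin

(* Finite fields are HOL-Algebra records R :: nat ring (every finite field is isomorphic
   to one whose carrier is a set of naturals), so that the absolute constant can be
   quantified before all fields. *)

type_synonym pt2 = "nat \<times> nat"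
type_synonym pt3 = "(nat \<times> nat) \<times> nat"

definition ring_char :: "nat ring \<Rightarrow> nat" where
  "ring_char R = (LEAST n. n > 0 \<and> [n] \<cdot>\<^bsub>R\<^esub> \<one>\<^bsub>R\<^esub> = \<zero>\<^bsub>R\<^esub>)"

definition pts2 :: "nat ring \<Rightarrow> pt2 set" where
  "pts2 R = carrier R \<times> carrier R"

definition pts3 :: "nat ring \<Rightarrow> pt3 set" where
  "pts3 R = (carrier R \<times> carrier R) \<times> carrier R"

definition add2 :: "nat ring \<Rightarrow> pt2 \<Rightarrow> pt2 \<Rightarrow> pt2" where
  "add2 R x y = (fst x \<oplus>\<^bsub>R\<^esub> fst y, snd x \<oplus>\<^bsub>R\<^esub> snd y)"

definition sub2 :: "nat ring \<Rightarrow> pt2 \<Rightarrow> pt2 \<Rightarrow> pt2" where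
  "sub2 R x y = (fst x \<ominus>\<^bsub>R\<^esub> fst y, snd x \<ominus>\<^bsub>R\<^esub> snd y)"

definition smult2 :: "nat ring \<Rightarrow> nat \<Rightarrow> pt2 \<Rightarrow> pt2" where
  "smult2 R c x = (c \<otimes>\<^bsub>R\<^esub> fst x, c \<otimes>\<^bsub>R\<^esub> snd x)"

definition dot2 :: "nat ring \<Rightarrow> pt2 \<Rightarrow> pt2 \<Rightarrow> nat" where
  "dot2 R x y = (fst x \<otimes>\<^bsub>R\<^esub> fst y) \<oplus>\<^bsub>R\<^esub> (snd x \<otimes>\<^bsub>R\<^esub> snd y)"

definition sub3 :: "nat ring \<Rightarrow> pt3 \<Rightarrow> pt3 \<Rightarrow> pt3" where
  "sub3 R x y = (sub2 R (fst x) (fst y), snd x \<ominus>\<^bsub>R\<^esub> snd y)"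

definition dot3 :: "nat ring \<Rightarrow> pt3 \<Rightarrow> pt3 \<Rightarrow> nat" where
  "dot3 R x y = dot2 R (fst x) (fst y) \<oplus>\<^bsub>R\<^esub> (snd x \<otimes>\<^bsub>R\<^esub> snd y)"

definition additive_character :: "nat ring \<Rightarrow> (nat \<Rightarrow> complex) \<Rightarrow> bool" where
  "additive_character R e \<longleftrightarrow>
     (\<forall>a\<in>carrier R. e a \<noteq> 0) \<and>
     (\<forall>a\<in>carrier R. \<forall>b\<in>carrier R. e (a \<oplus>\<^bsub>R\<^esub> b) = e a * e b)"

definition nontrivial_character :: "nat ring \<Rightarrow> (nat \<Rightarrow> complex) \<Rightarrow> bool" where
  "nontrivial_character R e \<longleftrightarrow> additive_character R e \<and> (\<exists>a\<in>carrier R. e a \<noteq> 1)"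

definition parab :: "nat ring \<Rightarrow> pt3 set" where
  "parab R = {(u, dot2 R u u) | u. u \<in> pts2 R}"

definition dsigma_check :: "nat ring \<Rightarrow> (nat \<Rightarrow> complex) \<Rightarrow> pt3 \<Rightarrow> complex" where
  "dsigma_check R e x = (\<Sum>\<xi>\<in>parab R. e (dot3 R x \<xi>)) / (of_nat (card (carrier R)))^2"

definition delta0 :: "nat ring \<Rightarrow> pt3 \<Rightarrow> complex" where
  "delta0 R x = (if x = ((\<zero>\<^bsub>R\<^esub>, \<zero>\<^bsub>R\<^esub>), \<zero>\<^bsub>R\<^esub>) then 1 else 0)"

definition kernK :: "nat ring \<Rightarrow> (nat \<Rightarrow> complex) \<Rightarrow> pt3 \<Rightarrow> complex" where
  "kernK R e x = dsigma_check R e x - delta0 R x"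

definition conv3 :: "nat ring \<Rightarrow> (pt3 \<Rightarrow> complex) \<Rightarrow> (pt3 \<Rightarrow> complex) \<Rightarrow> pt3 \<Rightarrow> complex" where
  "conv3 R h1 h2 x = (\<Sum>y\<in>pts3 R. h1 y * h2 (sub3 R x y))"

definition L2sq :: "nat ring \<Rightarrow> (pt3 \<Rightarrow> complex) \<Rightarrow> real" where
  "L2sq R h = (\<Sum>x\<in>pts3 R. (cmod (h x))^2)"

definition is_corner :: "nat ring \<Rightarrow> pt2 \<Rightarrow> pt2 \<Rightarrow> pt2 \<Rightarrow> bool" where
  "is_corner R x0 x1 x2 \<longleftrightarrow> dot2 R (sub2 R x1 x0) (sub2 R x2 x1) = \<zero>\<^bsub>R\<^esub>"

definition is_rectangle :: "nat ring \<Rightarrow> pt2 \<Rightarrow> pt2 \<Rightarrow> pt2 \<Rightarrow> pt2 \<Rightarrow> bool" where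
  "is_rectangle R x0 x1 x2 x3 \<longleftrightarrow>
     is_corner R x0 x1 x2 \<and> is_corner R x1 x2 x3 \<and> is_corner R x2 x3 x0 \<and> is_corner R x3 x0 x1"

definition num_rect :: "nat ring \<Rightarrow> pt2 set \<Rightarrow> nat" where
  "num_rect R A = card {(x0, x1, x2, x3). x0 \<in> A \<and> x1 \<in> A \<and> x2 \<in> A \<and> x3 \<in> A \<and>
                                          is_rectangle R x0 x1 x2 x3}"

definition is_trapezoid :: "nat ring \<Rightarrow> pt2 \<Rightarrow> pt2 \<Rightarrow> pt2 \<Rightarrow> pt2 \<Rightarrow> bool" where
  "is_trapezoid R x1 x2 x3 x4 \<longleftrightarrow>
     (\<exists>c\<in>carrier R. sub2 R x1 x2 = smult2 R c (sub2 R x3 x4))"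

definition num_trap :: "nat ring \<Rightarrow> pt2 set \<Rightarrow> pt2 set \<Rightarrow> nat" where
  "num_trap R A B = card {(x1, x2, x3, x4). x1 \<in> A \<and> x2 \<in> A \<and> x3 \<in> B \<and> x4 \<in> B \<and>
                                          is_trapezoid R x1 x2 x3 x4}"

definition Bquant :: "nat ring \<Rightarrow> pt2 set \<Rightarrow> pt2 set \<Rightarrow> real" where
  "Bquant R A B = min (real (num_trap R A B))
                      (real (card (carrier R)) * sqrt (real (num_rect R A) * real (num_rect R B)))"

definition sim_one_on_support :: "(pt3 \<Rightarrow> complex) \<Rightarrow> bool" where
  "sim_one_on_support h \<longleftrightarrow> (\<forall>x. h x \<noteq> 0 \<longrightarrow> 1/2 \<le> cmod (h x) \<and> cmod (h x) \<le> 2)"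

definition supported_on_plane :: "nat ring \<Rightarrow> (pt3 \<Rightarrow> complex) \<Rightarrow> nat \<Rightarrow> bool" where
  "supported_on_plane R h z \<longleftrightarrow> (\<forall>x. h x \<noteq> 0 \<longrightarrow> x \<in> pts3 R \<and> snd x = z)"

definition slice_set :: "nat ring \<Rightarrow> (pt3 \<Rightarrow> complex) \<Rightarrow> nat \<Rightarrow> pt2 set" where
  "slice_set R h z = {u \<in> pts2 R. h (u, z) \<noteq> 0}"

end

theory Submission
  imports Defs "HOL-Algebra.Multiplicative_Group"
begin

text \<open>
  Completing the square, the kernel \<open>K\<close> vanishes on the plane \<open>x\<^sub>3 = 0\<close>, and on the plane
  \<open>x\<^sub>3 = t \<noteq> 0\<close> it is a constant of modulus \<open>|F|\<^sup>-\<^sup>1\<close> (a squared Gauss sum over \<open>|F|\<^sup>2\<close>) times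
  the phase \<open>e(-|y|\<^sup>2/4t)\<close>. So on the plane \<open>x\<^sub>3 = w\<close> the function \<open>g\<^sub>z * K\<close> is a quadratic phase
  sum over \<open>G\<^sub>z\<close>, and \<open>\<Sum>\<^sub>x |g\<^sub>z * K|\<^sup>2 |g\<^sub>z\<^sub>' * K|\<^sup>2\<close> expands into a sum over quadruples
  \<open>(u\<^sub>1, u\<^sub>2, u\<^sub>3, u\<^sub>4) \<in> G\<^sub>z\<^sup>2 \<times> G\<^sub>z\<^sub>'\<^sup>2\<close> in which the sum over \<open>x\<close> is an orthogonality relation: it
  survives only if \<open>(w - z')(u\<^sub>1 - u\<^sub>2) + (w - z)(u\<^sub>3 - u\<^sub>4) = 0\<close>. For a fixed quadruple this
  holds for every \<open>w\<close> when \<open>u\<^sub>1 = u\<^sub>2\<close> and \<open>u\<^sub>3 = u\<^sub>4\<close>, and otherwise for at most one \<open>w\<close>, in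
  which case the quadruple is a trapezoid; this gives the bound through \<open>\<T>\<close>.

  For the bound through \<open>\<R>\<close>, Cauchy-Schwarz reduces to the fourth moment of a single \<open>g\<^sub>z * K\<close>.
  There the sum over \<open>x\<close> forces \<open>u\<^sub>1 - u\<^sub>2 + u\<^sub>3 - u\<^sub>4 = 0\<close>, and the sum over \<open>w\<close> of
  \<open>e((|u\<^sub>2|\<^sup>2 - |u\<^sub>1|\<^sup>2 + |u\<^sub>4|\<^sup>2 - |u\<^sub>3|\<^sup>2)/4(w - z))\<close> equals \<open>|F|\<close> or \<open>0\<close>, minus \<open>1\<close>. The subtracted
  term is a fourth moment of a Fourier transform, hence nonnegative, and the parallelograms with
  \<open>|u\<^sub>1|\<^sup>2 + |u\<^sub>3|\<^sup>2 = |u\<^sub>2|\<^sup>2 + |u\<^sub>4|\<^sup>2\<close> are rectangles.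
\<close>

lemma pts3_eq: "pts3 R = pts2 R \<times> carrier R"
  unfolding pts3_def pts2_def ..

lemma slice_set_subset: "slice_set R g z \<subseteq> pts2 R"
  unfolding slice_set_def by blast

lemma norm_le_two_if_sim_one: "sim_one_on_support g \<Longrightarrow> cmod (g x) \<le> 2"
  by (metis norm_zero sim_one_on_support_def zero_le_numeral)

lemma sum_pts2_product:
  fixes f g :: "nat \<Rightarrow> complex"
  shows "(\<Sum>x\<in>pts2 R. f (fst x) * g (snd x)) = (\<Sum>a\<in>carrier R. f a) * (\<Sum>b\<in>carrier R. g b)"
  unfolding pts2_def sum_product sum.cartesian_product by (simp add: split_def)

lemma sum_mult_sum:
  fixes f :: "'a \<Rightarrow> complex" and g :: "'b \<Rightarrow> complex"
  shows "(\<Sum>x\<in>A. f x) * (\<Sum>y\<in>B. g y) = (\<Sum>(x, y)\<in>A \<times> B. f x * g y)"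
  by (simp add: sum_product sum.cartesian_product)

lemma sum_product4:
  fixes f g h k :: "'a \<Rightarrow> complex"
  shows "(\<Sum>u\<in>A. f u) * (\<Sum>u\<in>B. g u) * (\<Sum>u\<in>C. h u) * (\<Sum>u\<in>D. k u)
    = (\<Sum>(u1, u2, u3, u4)\<in>A \<times> B \<times> C \<times> D. f u1 * g u2 * h u3 * k u4)"
  by (simp only: mult.assoc, simp only: sum_mult_sum, simp add: split_def)

lemma norm_sq_mult_norm_sq_sum:
  fixes f g :: "'a \<Rightarrow> complex"
  shows "complex_of_real ((cmod (\<Sum>u\<in>A. f u))\<^sup>2 * (cmod (\<Sum>v\<in>B. g v))\<^sup>2)
    = (\<Sum>(u1, u2, u3, u4)\<in>A \<times> A \<times> B \<times> B. f u1 * cnj (f u2) * g u3 * cnj (g u4))"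
proof -
  have "complex_of_real ((cmod (\<Sum>u\<in>A. f u))\<^sup>2 * (cmod (\<Sum>v\<in>B. g v))\<^sup>2)
      = (\<Sum>u\<in>A. f u) * (\<Sum>u\<in>A. cnj (f u)) * (\<Sum>v\<in>B. g v) * (\<Sum>v\<in>B. cnj (g v))"
    by (simp only: of_real_mult complex_norm_square cnj_sum mult_ac)
  then show ?thesis by (simp only: sum_product4)
qed

lemma sum_of_bool_quadruples:
  assumes "finite S"
  shows "(\<Sum>(u1, u2, u3, u4)\<in>S. of_bool (P u1 u2 u3 u4)) = real (card (S \<inter> {(u1, u2, u3, u4). P u1 u2 u3 u4}))"
proof -
  have "(\<Sum>(u1, u2, u3, u4)\<in>S. of_bool (P u1 u2 u3 u4)) = (\<Sum>Q\<in>S. of_bool (Q \<in> {(u1, u2, u3, u4). P u1 u2 u3 u4}) :: real)"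
    by (intro sum.cong refl) auto
  then show ?thesis
    using assms by (simp only: sum_of_bool_eq Collect_mem_eq)
qed

lemma sum_of_bool_diagonal:
  fixes A B :: "'a set"
  assumes "finite A" "finite B"
  shows "(\<Sum>(u1, u2, u3, u4)\<in>A \<times> A \<times> B \<times> B. of_bool (u1 = u2 \<and> u3 = u4)) = real (card A * card B)"
proof -
  have "(A \<times> A \<times> B \<times> B) \<inter> {(u1, u2, u3, u4). u1 = u2 \<and> u3 = u4} = (\<lambda>(u, v). (u, u, v, v)) ` (A \<times> B)"
    by auto
  moreover have "inj_on (\<lambda>(u, v). (u, u, v, v)) (A \<times> B)"
    by (auto simp: inj_on_def)
  ultimately show ?thesis
    using assms by (simp only: sum_of_bool_quadruples finite_cartesian_product card_image card_cartesian_product)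
qed

lemma sum_of_bool_trapezoid:
  assumes "finite A" "finite B"
  shows "(\<Sum>(u1, u2, u3, u4)\<in>A \<times> A \<times> B \<times> B. of_bool (is_trapezoid R u1 u2 u3 u4)) = real (num_trap R A B)"
proof -
  have "(A \<times> A \<times> B \<times> B) \<inter> {(u1, u2, u3, u4). is_trapezoid R u1 u2 u3 u4}
      = {(x1, x2, x3, x4). x1 \<in> A \<and> x2 \<in> A \<and> x3 \<in> B \<and> x4 \<in> B \<and> is_trapezoid R x1 x2 x3 x4}"
    by auto
  then show ?thesis
    using assms unfolding num_trap_def by (simp only: sum_of_bool_quadruples finite_cartesian_product)
qed

lemma L2sq_mult_le:
  "L2sq R (\<lambda>x. f x * h x) \<le> sqrt (L2sq R (\<lambda>x. f x * f x) * L2sq R (\<lambda>x. h x * h x))"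
proof -
  have "(L2sq R (\<lambda>x. f x * h x))\<^sup>2
      = (\<Sum>x\<in>pts3 R. (cmod (f x))\<^sup>2 * (cmod (h x))\<^sup>2)\<^sup>2"
    unfolding L2sq_def by (simp add: norm_mult power_mult_distrib)
  also have "\<dots> \<le> (\<Sum>x\<in>pts3 R. ((cmod (f x))\<^sup>2)\<^sup>2) * (\<Sum>x\<in>pts3 R. ((cmod (h x))\<^sup>2)\<^sup>2)"
    by (rule Cauchy_Schwarz_ineq_sum)
  also have "\<dots> = L2sq R (\<lambda>x. f x * f x) * L2sq R (\<lambda>x. h x * h x)"
    unfolding L2sq_def by (simp add: norm_mult power2_eq_square)
  finally show ?thesis by (rule real_le_rsqrt)
qed

lemma L2sq_mult_eq_sum_slices:
  "L2sq R (\<lambda>x. f x * h x)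
    = (\<Sum>w\<in>carrier R. \<Sum>x\<in>pts2 R. (cmod (f (x, w)))\<^sup>2 * (cmod (h (x, w)))\<^sup>2)"
proof -
  have "L2sq R (\<lambda>x. f x * h x) = (\<Sum>(x, w)\<in>pts2 R \<times> carrier R. (cmod (f (x, w)))\<^sup>2 * (cmod (h (x, w)))\<^sup>2)"
    unfolding L2sq_def pts3_eq by (simp add: split_def norm_mult power_mult_distrib)
  then show ?thesis
    by (subst sum.swap) (simp add: sum.cartesian_product split_def)
qed

lemma one_plus_one_neq_zero:
  fixes R :: "nat ring" (structure)
  assumes "domain R" and "odd (ring_char R)"
  shows "\<one> \<oplus> \<one> \<noteq> \<zero>"
proof
  interpret domain R by fact
  assume two: "\<one> \<oplus> \<one> = \<zero>"
  let ?P = "\<lambda>n::nat. n > 0 \<and> add_pow R n \<one> = \<zero>"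
  have P2: "?P 2"
    using two by (simp add: numeral_2_eq_2)
  have "ring_char R \<le> 2"
    unfolding ring_char_def by (rule Least_le) (rule P2)
  moreover have "?P (ring_char R)"
    unfolding ring_char_def by (rule LeastI) (rule P2)
  moreover have "\<not> ?P 1"
    by simp
  ultimately have "ring_char R = 2"
    by (cases "ring_char R = 1") auto
  then show False
    using assms by simp
qed

lemma (in cring) diff_neg_scaled_squares:
  assumes "r \<in> carrier R" "x \<in> carrier R" "u \<in> carrier R" "v \<in> carrier R"
  shows "\<ominus> (r \<otimes> ((x \<ominus> u) \<otimes> (x \<ominus> u))) \<ominus> \<ominus> (r \<otimes> ((x \<ominus> v) \<otimes> (x \<ominus> v)))
    = x \<otimes> (r \<otimes> (u \<ominus> v) \<oplus> r \<otimes> (u \<ominus> v)) \<oplus> r \<otimes> (v \<otimes> v \<ominus> u \<otimes> u)"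
  using assms by algebra

lemma (in cring) add_linear_forms:
  assumes "x \<in> carrier R" "a \<in> carrier R" "b \<in> carrier R" "c \<in> carrier R" "d \<in> carrier R"
  shows "(x \<otimes> (a \<oplus> a) \<oplus> c) \<oplus> (x \<otimes> (b \<oplus> b) \<oplus> d) = x \<otimes> ((a \<oplus> b) \<oplus> (a \<oplus> b)) \<oplus> (c \<oplus> d)"
  using assms by algebra

lemma (in cring) add_scaled_differences:
  assumes "r \<in> carrier R" "s \<in> carrier R" "p1 \<in> carrier R" "p2 \<in> carrier R" "p3 \<in> carrier R"
    "p4 \<in> carrier R" "q1 \<in> carrier R" "q2 \<in> carrier R" "q3 \<in> carrier R" "q4 \<in> carrier R"
  shows "r \<otimes> (p2 \<ominus> p1) \<oplus> s \<otimes> (p4 \<ominus> p3) \<oplus> (r \<otimes> (q2 \<ominus> q1) \<oplus> s \<otimes> (q4 \<ominus> q3))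
    = r \<otimes> ((p2 \<oplus> q2) \<ominus> (p1 \<oplus> q1)) \<oplus> s \<otimes> ((p4 \<oplus> q4) \<ominus> (p3 \<oplus> q3))"
  using assms by algebra

lemma (in cring) mult_alternating_sum:
  assumes "x \<in> carrier R" "a1 \<in> carrier R" "a2 \<in> carrier R" "a3 \<in> carrier R" "a4 \<in> carrier R"
  shows "x \<otimes> a1 \<ominus> x \<otimes> a2 \<oplus> (x \<otimes> a3 \<ominus> x \<otimes> a4) = x \<otimes> ((a1 \<ominus> a2) \<oplus> (a3 \<ominus> a4))"
  using assms by algebra

lemma (in cring) parallelogram_coordinate_identities:
  assumes "a1 \<in> carrier R" "a2 \<in> carrier R" "a3 \<in> carrier R"
  defines "a4 \<equiv> a1 \<ominus> a2 \<oplus> a3"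
  shows "(a2 \<otimes> a2 \<ominus> a1 \<otimes> a1) \<oplus> (a4 \<otimes> a4 \<ominus> a3 \<otimes> a3)
      = \<ominus> ((a2 \<ominus> a1) \<otimes> (a3 \<ominus> a2) \<oplus> (a2 \<ominus> a1) \<otimes> (a3 \<ominus> a2))"
    and "(a3 \<ominus> a2) \<otimes> (a4 \<ominus> a3) = \<ominus> ((a2 \<ominus> a1) \<otimes> (a3 \<ominus> a2))"
    and "(a4 \<ominus> a3) \<otimes> (a1 \<ominus> a4) = (a2 \<ominus> a1) \<otimes> (a3 \<ominus> a2)"
    and "(a1 \<ominus> a4) \<otimes> (a2 \<ominus> a1) = \<ominus> ((a2 \<ominus> a1) \<otimes> (a3 \<ominus> a2))"
  using assms(1-3) unfolding a4_def by algebra+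

lemma (in cring) eq_of_diff_add_diff_eq_zero:
  assumes "a1 \<in> carrier R" "a2 \<in> carrier R" "a3 \<in> carrier R" "a4 \<in> carrier R"
    and "(a1 \<ominus> a2) \<oplus> (a3 \<ominus> a4) = \<zero>"
  shows "a4 = a1 \<ominus> a2 \<oplus> a3"
proof -
  have "a1 \<ominus> a2 \<oplus> a3 = ((a1 \<ominus> a2) \<oplus> (a3 \<ominus> a4)) \<oplus> a4"
    using assms(1-4) by algebra
  then show ?thesis
    using assms by simp
qed

lemma (in cring) minus_double_add_minus_double:
  assumes "x \<in> carrier R" "y \<in> carrier R"
  shows "\<ominus> (x \<oplus> x) \<oplus> \<ominus> (y \<oplus> y) = \<ominus> ((x \<oplus> y) \<oplus> (x \<oplus> y))"
  using assms by algebra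

lemma (in domain) eq_zero_if_two_cancelling_heights:
  assumes c: "w0 \<in> carrier R" "w1 \<in> carrier R" "z \<in> carrier R" "z' \<in> carrier R"
      "a \<in> carrier R" "b \<in> carrier R"
    and ne: "w0 \<noteq> w1" "z \<noteq> z'"
    and h0: "(w0 \<ominus> z') \<otimes> a \<oplus> (w0 \<ominus> z) \<otimes> b = \<zero>"
    and h1: "(w1 \<ominus> z') \<otimes> a \<oplus> (w1 \<ominus> z) \<otimes> b = \<zero>"
  shows "a = \<zero> \<and> b = \<zero>"
proof -
  have "(w1 \<ominus> w0) \<otimes> (a \<oplus> b) = ((w1 \<ominus> z') \<otimes> a \<oplus> (w1 \<ominus> z) \<otimes> b) \<ominus> ((w0 \<ominus> z') \<otimes> a \<oplus> (w0 \<ominus> z) \<otimes> b)"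
    using c by algebra
  then have "(w1 \<ominus> w0) \<otimes> (a \<oplus> b) = \<zero>"
    using h0 h1 by (simp add: a_minus_def)
  then have sum0: "a \<oplus> b = \<zero>"
    using c ne by (simp add: integral_iff)
  have "(w0 \<ominus> z') \<otimes> a \<oplus> (w0 \<ominus> z) \<otimes> b = (z \<ominus> z') \<otimes> a \<oplus> (w0 \<ominus> z) \<otimes> (a \<oplus> b)"
    using c by algebra
  then have "(z \<ominus> z') \<otimes> a = \<zero>"
    using c h0 sum0 by simp
  then have "a = \<zero>"
    using c ne by (simp add: integral_iff)
  then show ?thesis
    using c sum0 by simp
qed

lemma (in field) eq_smult_if_cancelling_height:
  assumes c: "s \<in> carrier R" "s' \<in> carrier R" "a \<in> carrier R" "b \<in> carrier R" and "s' \<noteq> \<zero>"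
    and h: "s' \<otimes> a \<oplus> s \<otimes> b = \<zero>"
  shows "a = (\<ominus> (s \<otimes> inv s')) \<otimes> b"
proof -
  have inv: "inv s' \<in> carrier R" "inv s' \<otimes> s' = \<one>"
    using assms field_Units by auto
  have "s' \<otimes> a = \<ominus> (s \<otimes> b)"
    using c h by (simp add: minus_equality)
  then have "inv s' \<otimes> (s' \<otimes> a) = inv s' \<otimes> \<ominus> (s \<otimes> b)"
    by simp
  moreover have "inv s' \<otimes> (s' \<otimes> a) = a"
    using c inv by (simp add: m_assoc[symmetric])
  moreover have "inv s' \<otimes> \<ominus> (s \<otimes> b) = (\<ominus> (s \<otimes> inv s')) \<otimes> b"
    using c inv by algebra
  ultimately show ?thesis
    by simp
qed

section \<open>Additive characters of a finite field\<close>

locale finite_field_character = field R for R :: "nat ring" (structure) +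
  fixes e :: "nat \<Rightarrow> complex"
  assumes finite_carrier: "finite (carrier R)"
    and nontrivial: "nontrivial_character R e"
begin

definition q :: real where
  "q = real (card (carrier R))"

lemma q_pos: "q > 0"
  unfolding q_def using finite_carrier zero_closed by (auto simp: card_gt_0_iff)

lemma char_add: "a \<in> carrier R \<Longrightarrow> b \<in> carrier R \<Longrightarrow> e (a \<oplus> b) = e a * e b"
  using nontrivial unfolding nontrivial_character_def additive_character_def by blast

lemma char_nonzero: "a \<in> carrier R \<Longrightarrow> e a \<noteq> 0"
  using nontrivial unfolding nontrivial_character_def additive_character_def by blast

lemma char_zero: "e \<zero> = 1"
  using char_add[of \<zero> \<zero>] char_nonzero[of \<zero>] by simp

lemma char_norm:
  assumes a: "a \<in> carrier R"
  shows "cmod (e a) = 1"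
proof -
  let ?P = "\<Prod>x\<in>carrier R. e x"
  have "?P = (\<Prod>x\<in>carrier R. e (x \<oplus> a))"
    by (rule prod.reindex_bij_witness[of _ "\<lambda>x. x \<oplus> a" "\<lambda>x. x \<ominus> a"])
       (use a in \<open>simp_all add: a_minus_def a_assoc l_neg r_neg\<close>)
  also have "\<dots> = e a ^ card (carrier R) * ?P"
    using a by (simp add: char_add prod.distrib mult.commute)
  finally have "e a ^ card (carrier R) = 1"
    using char_nonzero by (simp add: finite_carrier)
  from power_eq_1_iff[OF this] show ?thesis
    using q_pos q_def by auto
qed

lemma char_uminus:
  assumes a: "a \<in> carrier R"
  shows "e (\<ominus> a) = cnj (e a)"
proof -
  have "e (\<ominus> a) * e a = 1"
    using a char_add[of "\<ominus> a" a] by (simp add: l_neg char_zero)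
  moreover have "cnj (e a) * e a = 1"
    using char_norm[OF a] complex_norm_square[of "e a"] by (simp add: mult.commute)
  ultimately show ?thesis
    using char_nonzero[OF a] by (metis mult_cancel_right)
qed

lemma char_alternating_product:
  assumes "a \<in> carrier R" "b \<in> carrier R" "c \<in> carrier R" "d \<in> carrier R"
  shows "e a * cnj (e b) * e c * cnj (e d) = e (a \<ominus> b \<oplus> (c \<ominus> d))"
  using assms by (simp add: a_minus_def char_add char_uminus)

lemma sum_char: "(\<Sum>x\<in>carrier R. e x) = 0"
proof -
  obtain b where b: "b \<in> carrier R" "e b \<noteq> 1"
    using nontrivial unfolding nontrivial_character_def by blast
  have "(\<Sum>x\<in>carrier R. e x) = (\<Sum>x\<in>carrier R. e (b \<oplus> x))"
    by (rule sum.reindex_bij_witness[of _ "\<lambda>x. b \<oplus> x" "\<lambda>x. \<ominus> b \<oplus> x"])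
       (use b in \<open>simp_all add: a_assoc[symmetric] r_neg l_neg\<close>)
  also have "\<dots> = e b * (\<Sum>x\<in>carrier R. e x)"
    using b by (simp add: char_add sum_distrib_left)
  finally show ?thesis
    using b by (metis mult_cancel_right1)
qed

lemma sum_char_mult:
  assumes c: "c \<in> carrier R"
  shows "(\<Sum>x\<in>carrier R. e (c \<otimes> x)) = (if c = \<zero> then complex_of_real q else 0)"
proof (cases "c = \<zero>")
  case True
  then show ?thesis
    by (simp add: char_zero q_def)
next
  case False
  then have "inv c \<in> carrier R" "c \<otimes> inv c = \<one>" "inv c \<otimes> c = \<one>"
    using c field_Units by auto
  then have "(\<Sum>x\<in>carrier R. e (c \<otimes> x)) = (\<Sum>x\<in>carrier R. e x)"
    by (intro sum.reindex_bij_witness[of _ "\<lambda>x. inv c \<otimes> x" "\<lambda>x. c \<otimes> x"])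
       (use c in \<open>simp_all add: m_assoc[symmetric]\<close>)
  then show ?thesis
    using False sum_char by simp
qed

lemma sum_char_affine:
  assumes "l \<in> carrier R" "c \<in> carrier R"
  shows "(\<Sum>t\<in>carrier R. e (t \<otimes> l \<oplus> c)) = (if l = \<zero> then complex_of_real q * e c else 0)"
proof -
  have "(\<Sum>t\<in>carrier R. e (t \<otimes> l \<oplus> c)) = (\<Sum>t\<in>carrier R. e (l \<otimes> t)) * e c"
    using assms by (simp add: char_add sum_distrib_right m_comm)
  then show ?thesis
    using assms by (simp add: sum_char_mult)
qed

lemma sub2_closed: "x \<in> pts2 R \<Longrightarrow> u \<in> pts2 R \<Longrightarrow> sub2 R x u \<in> pts2 R"
  by (auto simp: pts2_def sub2_def)

lemma sub2_eq_zero_iff: "u \<in> pts2 R \<Longrightarrow> v \<in> pts2 R \<Longrightarrow> sub2 R u v = (\<zero>, \<zero>) \<longleftrightarrow> u = v"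
  by (auto simp: pts2_def sub2_def prod_eq_iff)

lemma finite_slice_set: "finite (slice_set R g z)"
  using finite_subset[OF slice_set_subset] finite_carrier by (simp add: pts2_def)

text \<open>The cancellation condition is affine in \<open>w\<close>: two solutions force both differences to
  vanish, while a single solution exhibits the quadruple as a trapezoid.\<close>

lemma card_cancelling_heights_le:
  assumes z: "z \<in> carrier R" "z' \<in> carrier R" "z \<noteq> z'" and d: "d \<in> pts2 R" "d' \<in> pts2 R"
  shows "real (card {w \<in> carrier R - {z, z'}. add2 R (smult2 R (w \<ominus> z') d) (smult2 R (w \<ominus> z) d') = (\<zero>, \<zero>)})
    \<le> q * of_bool (d = (\<zero>, \<zero>) \<and> d' = (\<zero>, \<zero>)) + of_bool (\<exists>c\<in>carrier R. d = smult2 R c d')"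
proof -
  obtain d1 d2 d1' d2' where dd: "d = (d1, d2)" "d' = (d1', d2')"
    by (metis prod.exhaust)
  have c: "d1 \<in> carrier R" "d2 \<in> carrier R" "d1' \<in> carrier R" "d2' \<in> carrier R"
    using d unfolding dd pts2_def by auto
  let ?S = "{w \<in> carrier R - {z, z'}. add2 R (smult2 R (w \<ominus> z') d) (smult2 R (w \<ominus> z) d') = (\<zero>, \<zero>)}"
  have S: "w \<in> ?S \<longleftrightarrow> w \<in> carrier R \<and> w \<noteq> z \<and> w \<noteq> z'
      \<and> (w \<ominus> z') \<otimes> d1 \<oplus> (w \<ominus> z) \<otimes> d1' = \<zero> \<and> (w \<ominus> z') \<otimes> d2 \<oplus> (w \<ominus> z) \<otimes> d2' = \<zero>" for w
    unfolding dd add2_def smult2_def by auto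
  show ?thesis
  proof (cases "d = (\<zero>, \<zero>) \<and> d' = (\<zero>, \<zero>)")
    case True
    have "card ?S \<le> card (carrier R)"
      using finite_carrier by (intro card_mono) auto
    then show ?thesis
      using True by (simp add: q_def)
  next
    case nonzero: False
    have "card ?S \<le> of_bool (\<exists>c\<in>carrier R. d = smult2 R c d')"
    proof (cases "?S = {}")
      case True
      then show ?thesis
        by (simp only: card.empty)
    next
      case False
      then obtain w0 where w0: "w0 \<in> ?S"
        by blast
      have "?S \<subseteq> {w0}"
      proof
        fix w1 assume w1: "w1 \<in> ?S"
        show "w1 \<in> {w0}"
        proof (rule ccontr)
          assume "w1 \<notin> {w0}"
          then have "d1 = \<zero> \<and> d1' = \<zero>" "d2 = \<zero> \<and> d2' = \<zero>"
            using eq_zero_if_two_cancelling_heights[of w0 w1 z z' d1 d1'] eq_zero_if_two_cancelling_heights[of w0 w1 z z' d2 d2']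
              w0 w1 z c unfolding S by auto
          then show False
            using nonzero dd by simp
        qed
      qed
      then have "card ?S \<le> 1"
        using card_mono[of "{w0}"] by simp
      moreover have "w0 \<ominus> z' \<noteq> \<zero>" "w0 \<ominus> z \<in> carrier R" "w0 \<ominus> z' \<in> carrier R"
        and h0: "(w0 \<ominus> z') \<otimes> d1 \<oplus> (w0 \<ominus> z) \<otimes> d1' = \<zero>" "(w0 \<ominus> z') \<otimes> d2 \<oplus> (w0 \<ominus> z) \<otimes> d2' = \<zero>"
        using w0 z unfolding S by auto
      then have "d = smult2 R (\<ominus> ((w0 \<ominus> z) \<otimes> inv (w0 \<ominus> z'))) d'"
        using c unfolding dd smult2_def by (auto intro: eq_smult_if_cancelling_height)
      then have "\<exists>c\<in>carrier R. d = smult2 R c d'"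
        using \<open>w0 \<ominus> z' \<noteq> \<zero>\<close> \<open>w0 \<ominus> z \<in> carrier R\<close> \<open>w0 \<ominus> z' \<in> carrier R\<close> field_Units by blast
      ultimately show ?thesis
        by simp
    qed
    then have "real (card ?S) \<le> of_bool (\<exists>c\<in>carrier R. d = smult2 R c d')"
      by (cases "\<exists>c\<in>carrier R. d = smult2 R c d'") auto
    moreover have "of_bool (d = (\<zero>, \<zero>) \<and> d' = (\<zero>, \<zero>)) = (0::real)"
      using nonzero by simp
    ultimately show ?thesis
      by (simp only: mult_zero_right add_0)
  qed
qed

definition parallelogram :: "pt2 \<Rightarrow> pt2 \<Rightarrow> pt2 \<Rightarrow> pt2 \<Rightarrow> bool" where
  "parallelogram u1 u2 u3 u4 \<longleftrightarrow> add2 R (sub2 R u1 u2) (sub2 R u3 u4) = (\<zero>, \<zero>)"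

definition norm_defect :: "pt2 \<Rightarrow> pt2 \<Rightarrow> pt2 \<Rightarrow> pt2 \<Rightarrow> nat" where
  "norm_defect u1 u2 u3 u4 = (dot2 R u2 u2 \<ominus> dot2 R u1 u1) \<oplus> (dot2 R u4 u4 \<ominus> dot2 R u3 u3)"

lemma norm_defect_closed:
  "u1 \<in> pts2 R \<Longrightarrow> u2 \<in> pts2 R \<Longrightarrow> u3 \<in> pts2 R \<Longrightarrow> u4 \<in> pts2 R \<Longrightarrow> norm_defect u1 u2 u3 u4 \<in> carrier R"
  by (auto simp: pts2_def norm_defect_def dot2_def)

lemma add2_smult2_eq_zero_iff:
  assumes "r \<in> carrier R" "r \<noteq> \<zero>" "d \<in> pts2 R" "d' \<in> pts2 R"
  shows "add2 R (smult2 R r d) (smult2 R r d') = (\<zero>, \<zero>) \<longleftrightarrow> add2 R d d' = (\<zero>, \<zero>)"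
  using assms by (auto simp: pts2_def add2_def smult2_def r_distr[symmetric] integral_iff)

lemma sum_char_dot2_alternating:
  assumes pts: "u1 \<in> pts2 R" "u2 \<in> pts2 R" "u3 \<in> pts2 R" "u4 \<in> pts2 R"
  shows "(\<Sum>\<xi>\<in>pts2 R. e (dot2 R \<xi> u1) * cnj (e (dot2 R \<xi> u2)) * e (dot2 R \<xi> u3) * cnj (e (dot2 R \<xi> u4)))
    = (complex_of_real q)\<^sup>2 * of_bool (parallelogram u1 u2 u3 u4)"
proof -
  obtain a1 b1 a2 b2 a3 b3 a4 b4 where
    pt: "u1 = (a1, b1)" "u2 = (a2, b2)" "u3 = (a3, b3)" "u4 = (a4, b4)"
    by (metis prod.exhaust)
  have c: "a1 \<in> carrier R" "b1 \<in> carrier R" "a2 \<in> carrier R" "b2 \<in> carrier R"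
      "a3 \<in> carrier R" "b3 \<in> carrier R" "a4 \<in> carrier R" "b4 \<in> carrier R"
    using pts unfolding pt pts2_def by auto
  let ?la = "(a1 \<ominus> a2) \<oplus> (a3 \<ominus> a4)" and ?lb = "(b1 \<ominus> b2) \<oplus> (b3 \<ominus> b4)"
  have "(\<Sum>\<xi>\<in>pts2 R. e (dot2 R \<xi> u1) * cnj (e (dot2 R \<xi> u2)) * e (dot2 R \<xi> u3) * cnj (e (dot2 R \<xi> u4)))
      = (\<Sum>\<xi>\<in>pts2 R. e (fst \<xi> \<otimes> ?la) * e (snd \<xi> \<otimes> ?lb))"
  proof (rule sum.cong[OF refl])
    fix \<xi> assume "\<xi> \<in> pts2 R"
    then obtain x y where \<xi>: "\<xi> = (x, y)" "x \<in> carrier R" "y \<in> carrier R"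
      unfolding pts2_def by auto
    have "e (dot2 R \<xi> u1) * cnj (e (dot2 R \<xi> u2)) * e (dot2 R \<xi> u3) * cnj (e (dot2 R \<xi> u4))
        = (e (x \<otimes> a1) * cnj (e (x \<otimes> a2)) * e (x \<otimes> a3) * cnj (e (x \<otimes> a4)))
        * (e (y \<otimes> b1) * cnj (e (y \<otimes> b2)) * e (y \<otimes> b3) * cnj (e (y \<otimes> b4)))"
      unfolding \<xi> pt dot2_def using c \<xi> by (simp add: char_add mult_ac)
    also have "\<dots> = e (x \<otimes> ?la) * e (y \<otimes> ?lb)"
      using c \<xi> by (simp add: char_alternating_product mult_alternating_sum)
    finally show "e (dot2 R \<xi> u1) * cnj (e (dot2 R \<xi> u2)) * e (dot2 R \<xi> u3) * cnj (e (dot2 R \<xi> u4))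
        = e (fst \<xi> \<otimes> ?la) * e (snd \<xi> \<otimes> ?lb)"
      unfolding \<xi> by simp
  qed
  also have "\<dots> = (\<Sum>t\<in>carrier R. e (t \<otimes> ?la)) * (\<Sum>t\<in>carrier R. e (t \<otimes> ?lb))"
    by (rule sum_pts2_product)
  also have "\<dots> = (\<Sum>t\<in>carrier R. e (?la \<otimes> t)) * (\<Sum>t\<in>carrier R. e (?lb \<otimes> t))"
    using c by (simp add: m_comm[of _ ?la] m_comm[of _ ?lb] cong: sum.cong)
  also have "\<dots> = (complex_of_real q)\<^sup>2 * of_bool (parallelogram u1 u2 u3 u4)"
    using c by (simp add: sum_char_mult parallelogram_def pt add2_def sub2_def power2_eq_square)
  finally show ?thesis .
qed

definition fourier_coeff :: "pt2 set \<Rightarrow> (pt2 \<Rightarrow> complex) \<Rightarrow> pt2 \<Rightarrow> complex" where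
  "fourier_coeff A a \<xi> = (\<Sum>u\<in>A. a u * e (dot2 R \<xi> u))"

lemma sum_parallelograms_eq_fourth_moment:
  assumes A: "A \<subseteq> pts2 R"
  shows "(\<Sum>(u1, u2, u3, u4)\<in>A \<times> A \<times> A \<times> A. a u1 * cnj (a u2) * a u3 * cnj (a u4) * of_bool (parallelogram u1 u2 u3 u4))
    = complex_of_real ((\<Sum>\<xi>\<in>pts2 R. (cmod (fourier_coeff A a \<xi>))\<^sup>2 * (cmod (fourier_coeff A a \<xi>))\<^sup>2) / q\<^sup>2)"
proof -
  have "complex_of_real (\<Sum>\<xi>\<in>pts2 R. (cmod (fourier_coeff A a \<xi>))\<^sup>2 * (cmod (fourier_coeff A a \<xi>))\<^sup>2)
    = (\<Sum>\<xi>\<in>pts2 R. \<Sum>(u1, u2, u3, u4)\<in>A \<times> A \<times> A \<times> A. a u1 * cnj (a u2) * a u3 * cnj (a u4)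
        * (e (dot2 R \<xi> u1) * cnj (e (dot2 R \<xi> u2)) * e (dot2 R \<xi> u3) * cnj (e (dot2 R \<xi> u4))))"
    unfolding of_real_sum fourier_coeff_def norm_sq_mult_norm_sq_sum by (simp add: mult_ac)
  also have "\<dots> = (\<Sum>(u1, u2, u3, u4)\<in>A \<times> A \<times> A \<times> A. a u1 * cnj (a u2) * a u3 * cnj (a u4)
        * (\<Sum>\<xi>\<in>pts2 R. e (dot2 R \<xi> u1) * cnj (e (dot2 R \<xi> u2)) * e (dot2 R \<xi> u3) * cnj (e (dot2 R \<xi> u4))))"
    by (subst sum.swap) (simp add: split_def sum_distrib_left)
  also have "\<dots> = (\<Sum>(u1, u2, u3, u4)\<in>A \<times> A \<times> A \<times> A. (complex_of_real q)\<^sup>2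
        * (a u1 * cnj (a u2) * a u3 * cnj (a u4) * of_bool (parallelogram u1 u2 u3 u4)))"
  proof -
    have "a u1 * cnj (a u2) * a u3 * cnj (a u4)
        * (\<Sum>\<xi>\<in>pts2 R. e (dot2 R \<xi> u1) * cnj (e (dot2 R \<xi> u2)) * e (dot2 R \<xi> u3) * cnj (e (dot2 R \<xi> u4)))
      = (complex_of_real q)\<^sup>2 * (a u1 * cnj (a u2) * a u3 * cnj (a u4) * of_bool (parallelogram u1 u2 u3 u4))"
      if "u1 \<in> A" "u2 \<in> A" "u3 \<in> A" "u4 \<in> A" for u1 u2 u3 u4
    proof -
      have "u1 \<in> pts2 R" "u2 \<in> pts2 R" "u3 \<in> pts2 R" "u4 \<in> pts2 R"
        using that A by auto
      then show ?thesis
        by (simp add: sum_char_dot2_alternating)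
    qed
    then show ?thesis
      by (intro sum.cong refl) auto
  qed
  finally have "complex_of_real (\<Sum>\<xi>\<in>pts2 R. (cmod (fourier_coeff A a \<xi>))\<^sup>2 * (cmod (fourier_coeff A a \<xi>))\<^sup>2)
    = (complex_of_real q)\<^sup>2 * (\<Sum>(u1, u2, u3, u4)\<in>A \<times> A \<times> A \<times> A.
        a u1 * cnj (a u2) * a u3 * cnj (a u4) * of_bool (parallelogram u1 u2 u3 u4))"
    by (simp only: split_def sum_distrib_left)
  then show ?thesis
    using q_pos by (simp only: of_real_divide of_real_power) simp
qed

definition gauss_sum :: "nat \<Rightarrow> complex" where
  "gauss_sum t = (\<Sum>a\<in>carrier R. e (t \<otimes> a \<otimes> a))"

definition kern_phase :: "nat \<Rightarrow> pt2 \<Rightarrow> complex" where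
  "kern_phase r v = e (\<ominus> (r \<otimes> dot2 R v v))"

definition kern_const :: "nat \<Rightarrow> complex" where
  "kern_const t = (gauss_sum t)\<^sup>2 / (complex_of_real q)\<^sup>2"

lemma kern_phase_split:
  assumes "r \<in> carrier R" "v1 \<in> carrier R" "v2 \<in> carrier R"
  shows "kern_phase r (v1, v2) = e (\<ominus> (r \<otimes> (v1 \<otimes> v1))) * e (\<ominus> (r \<otimes> (v2 \<otimes> v2)))"
  using assms by (simp add: kern_phase_def dot2_def r_distr minus_add char_add)

lemma char_phase_alternating:
  assumes "r \<in> carrier R" "r' \<in> carrier R" "x \<in> carrier R"
    "u1 \<in> carrier R" "u2 \<in> carrier R" "u3 \<in> carrier R" "u4 \<in> carrier R"
  shows "e (\<ominus> (r \<otimes> ((x \<ominus> u1) \<otimes> (x \<ominus> u1)))) * cnj (e (\<ominus> (r \<otimes> ((x \<ominus> u2) \<otimes> (x \<ominus> u2)))))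
      * e (\<ominus> (r' \<otimes> ((x \<ominus> u3) \<otimes> (x \<ominus> u3)))) * cnj (e (\<ominus> (r' \<otimes> ((x \<ominus> u4) \<otimes> (x \<ominus> u4)))))
    = e (x \<otimes> ((r \<otimes> (u1 \<ominus> u2) \<oplus> r' \<otimes> (u3 \<ominus> u4)) \<oplus> (r \<otimes> (u1 \<ominus> u2) \<oplus> r' \<otimes> (u3 \<ominus> u4)))
        \<oplus> (r \<otimes> (u2 \<otimes> u2 \<ominus> u1 \<otimes> u1) \<oplus> r' \<otimes> (u4 \<otimes> u4 \<ominus> u3 \<otimes> u3)))"
  using assms
  by (simp add: char_alternating_product diff_neg_scaled_squares add_linear_forms)

definition phase_sum :: "pt2 set \<Rightarrow> (pt2 \<Rightarrow> complex) \<Rightarrow> nat \<Rightarrow> pt2 \<Rightarrow> complex" where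
  "phase_sum A a r x = (\<Sum>u\<in>A. a u * kern_phase r (sub2 R x u))"

lemma dsigma_check_eq:
  assumes y: "y \<in> pts2 R" and t: "t \<in> carrier R"
  shows "dsigma_check R e (y, t) = (\<Sum>a\<in>carrier R. e (fst y \<otimes> a \<oplus> t \<otimes> a \<otimes> a))
      * (\<Sum>b\<in>carrier R. e (snd y \<otimes> b \<oplus> t \<otimes> b \<otimes> b)) / (complex_of_real q)\<^sup>2"
proof -
  have parab: "parab R = (\<lambda>u. (u, dot2 R u u)) ` pts2 R"
    unfolding parab_def by auto
  have "(\<Sum>\<xi>\<in>parab R. e (dot3 R (y, t) \<xi>)) = (\<Sum>u\<in>pts2 R. e (dot3 R (y, t) (u, dot2 R u u)))"
    unfolding parab by (simp add: sum.reindex inj_on_def)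
  also have "\<dots> = (\<Sum>u\<in>pts2 R. e (fst y \<otimes> fst u \<oplus> t \<otimes> fst u \<otimes> fst u)
      * e (snd y \<otimes> snd u \<oplus> t \<otimes> snd u \<otimes> snd u))"
  proof (rule sum.cong[OF refl])
    fix u assume "u \<in> pts2 R"
    then have "dot3 R (y, t) (u, dot2 R u u) = (fst y \<otimes> fst u \<oplus> t \<otimes> fst u \<otimes> fst u) \<oplus> (snd y \<otimes> snd u \<oplus> t \<otimes> snd u \<otimes> snd u)"
      using y t unfolding pts2_def dot3_def dot2_def by (simp add: mem_Times_iff, algebra)
    then show "e (dot3 R (y, t) (u, dot2 R u u)) = e (fst y \<otimes> fst u \<oplus> t \<otimes> fst u \<otimes> fst u)
      * e (snd y \<otimes> snd u \<oplus> t \<otimes> snd u \<otimes> snd u)"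
      using y t \<open>u \<in> pts2 R\<close> by (simp add: pts2_def mem_Times_iff char_add)
  qed
  also have "\<dots> = (\<Sum>a\<in>carrier R. e (fst y \<otimes> a \<oplus> t \<otimes> a \<otimes> a)) * (\<Sum>b\<in>carrier R. e (snd y \<otimes> b \<oplus> t \<otimes> b \<otimes> b))"
    by (rule sum_pts2_product)
  finally show ?thesis
    unfolding dsigma_check_def q_def by simp
qed

end

section \<open>The kernel in odd characteristic\<close>

locale odd_finite_field_character = finite_field_character +
  assumes two_neq_zero: "\<one> \<oplus> \<one> \<noteq> \<zero>"
begin

definition two :: nat where
  "two = \<one> \<oplus> \<one>"

lemma two_closed [simp]: "two \<in> carrier R"
  and two_nonzero [simp]: "two \<noteq> \<zero>"
  unfolding two_def using two_neq_zero by simp_all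

lemma add_self: "x \<in> carrier R \<Longrightarrow> x \<oplus> x = two \<otimes> x"
  unfolding two_def by (simp add: l_distr)

lemma add_self_eq_zero_iff: "x \<in> carrier R \<Longrightarrow> x \<oplus> x = \<zero> \<longleftrightarrow> x = \<zero>"
  by (simp add: add_self integral_iff)

definition rho :: "nat \<Rightarrow> nat" where
  "rho t = inv (two \<otimes> two \<otimes> t)"

lemma rho_closed:
  assumes "t \<in> carrier R" "t \<noteq> \<zero>"
  shows "rho t \<in> carrier R" and "two \<otimes> two \<otimes> t \<otimes> rho t = \<one>" and "rho t \<noteq> \<zero>"
proof -
  have "two \<otimes> two \<otimes> t \<in> Units R"
    using assms by (simp add: field_Units integral_iff)
  then show "rho t \<in> carrier R" and inverse: "two \<otimes> two \<otimes> t \<otimes> rho t = \<one>"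
    unfolding rho_def by simp_all
  show "rho t \<noteq> \<zero>"
    using inverse assms by auto
qed

lemma rho_rho:
  assumes "t \<in> carrier R" "t \<noteq> \<zero>"
  shows "rho (rho t) = t"
proof -
  have "two \<otimes> two \<otimes> rho t \<otimes> t = two \<otimes> two \<otimes> t \<otimes> rho t"
    using assms rho_closed(1)[OF assms] two_closed by algebra
  then have "(two \<otimes> two \<otimes> rho t) \<otimes> t = \<one>"
    using rho_closed(2)[OF assms] by simp
  then show ?thesis
    unfolding rho_def[of "rho t"] using assms rho_closed(1)[OF assms] by (intro comm_inv_char) simp_all
qed

lemma norm_gauss_sum:
  assumes t: "t \<in> carrier R" "t \<noteq> \<zero>"
  shows "(cmod (gauss_sum t))\<^sup>2 = q"
proof -
  have "complex_of_real ((cmod (gauss_sum t))\<^sup>2)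
      = (\<Sum>b\<in>carrier R. \<Sum>a\<in>carrier R. e (t \<otimes> a \<otimes> a \<ominus> t \<otimes> b \<otimes> b))"
    unfolding complex_norm_square gauss_sum_def cnj_sum sum_product
    using t by (subst sum.swap) (simp add: a_minus_def char_add char_uminus)
  also have "\<dots> = (\<Sum>b\<in>carrier R. \<Sum>d\<in>carrier R. e (t \<otimes> d \<otimes> d) * e ((two \<otimes> t \<otimes> d) \<otimes> b))"
  proof (rule sum.cong[OF refl])
    fix b assume b: "b \<in> carrier R"
    show "(\<Sum>a\<in>carrier R. e (t \<otimes> a \<otimes> a \<ominus> t \<otimes> b \<otimes> b))
        = (\<Sum>d\<in>carrier R. e (t \<otimes> d \<otimes> d) * e ((two \<otimes> t \<otimes> d) \<otimes> b))"
    proof (rule sum.reindex_bij_witness[of _ "\<lambda>d. d \<oplus> b" "\<lambda>a. a \<ominus> b"])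
      fix a assume a: "a \<in> carrier R"
      have "t \<otimes> (a \<ominus> b) \<otimes> (a \<ominus> b) \<oplus> (t \<otimes> (a \<ominus> b) \<otimes> b \<oplus> t \<otimes> (a \<ominus> b) \<otimes> b)
          = t \<otimes> a \<otimes> a \<ominus> t \<otimes> b \<otimes> b"
        using t b a by algebra
      moreover have "t \<otimes> (a \<ominus> b) \<otimes> b \<oplus> t \<otimes> (a \<ominus> b) \<otimes> b = (two \<otimes> t \<otimes> (a \<ominus> b)) \<otimes> b"
        using t b a by (simp add: add_self m_assoc)
      ultimately
      show "e (t \<otimes> (a \<ominus> b) \<otimes> (a \<ominus> b)) * e ((two \<otimes> t \<otimes> (a \<ominus> b)) \<otimes> b) = e (t \<otimes> a \<otimes> a \<ominus> t \<otimes> b \<otimes> b)"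
        using t b a by (simp add: char_add[symmetric])
    qed (use b in \<open>auto simp: a_minus_def a_assoc l_neg r_neg\<close>)
  qed
  also have "\<dots> = (\<Sum>d\<in>carrier R. e (t \<otimes> d \<otimes> d) * (if d = \<zero> then complex_of_real q else 0))"
    using t by (subst sum.swap) (simp add: sum_distrib_left[symmetric] sum_char_mult integral_iff)
  also have "\<dots> = (\<Sum>d\<in>carrier R. if d = \<zero> then complex_of_real q else 0)"
    using t by (intro sum.cong refl) (simp add: char_zero)
  also have "\<dots> = complex_of_real q"
    by (simp add: finite_carrier)
  finally show ?thesis
    by (simp only: of_real_eq_iff)
qed

lemma quadratic_char_sum:
  assumes t: "t \<in> carrier R" "t \<noteq> \<zero>" and b: "b \<in> carrier R"
  shows "(\<Sum>a\<in>carrier R. e (b \<otimes> a \<oplus> t \<otimes> a \<otimes> a)) = e (\<ominus> (rho t \<otimes> b \<otimes> b)) * gauss_sum t"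
proof -
  note r = rho_closed[OF t]
  define d where "d = two \<otimes> rho t \<otimes> b"
  have d: "d \<in> carrier R"
    using r b unfolding d_def by simp
  have "(\<Sum>a\<in>carrier R. e (b \<otimes> a \<oplus> t \<otimes> a \<otimes> a))
      = (\<Sum>a\<in>carrier R. e (t \<otimes> a \<otimes> a \<oplus> \<ominus> (rho t \<otimes> b \<otimes> b)))"
  proof (rule sum.reindex_bij_witness[of _ "\<lambda>a. a \<ominus> d" "\<lambda>a. a \<oplus> d"])
    fix a assume a: "a \<in> carrier R"
    have cross: "t \<otimes> d \<otimes> a \<oplus> t \<otimes> d \<otimes> a = (two \<otimes> two \<otimes> t \<otimes> rho t) \<otimes> (b \<otimes> a)"
      using a b d t r(1) two_closed unfolding add_self[OF m_closed[OF m_closed[OF t(1) d] a]]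
      unfolding d_def by algebra
    have square: "t \<otimes> d \<otimes> d = (two \<otimes> two \<otimes> t \<otimes> rho t) \<otimes> (rho t \<otimes> b \<otimes> b)"
      using b t r(1) two_closed unfolding d_def by algebra
    have "t \<otimes> (a \<oplus> d) \<otimes> (a \<oplus> d) = t \<otimes> a \<otimes> a \<oplus> (t \<otimes> d \<otimes> a \<oplus> t \<otimes> d \<otimes> a) \<oplus> t \<otimes> d \<otimes> d"
      using a d t by algebra
    also have "\<dots> = t \<otimes> a \<otimes> a \<oplus> b \<otimes> a \<oplus> rho t \<otimes> b \<otimes> b"
      unfolding cross square using a b r by simp
    finally have "t \<otimes> (a \<oplus> d) \<otimes> (a \<oplus> d) \<oplus> \<ominus> (rho t \<otimes> b \<otimes> b) = b \<otimes> a \<oplus> t \<otimes> a \<otimes> a"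
      using a b t r(1) by (simp, algebra)
    then show "e (t \<otimes> (a \<oplus> d) \<otimes> (a \<oplus> d) \<oplus> \<ominus> (rho t \<otimes> b \<otimes> b)) = e (b \<otimes> a \<oplus> t \<otimes> a \<otimes> a)"
      by simp
  qed (use d in \<open>auto simp: a_minus_def a_assoc l_neg r_neg\<close>)
  also have "\<dots> = e (\<ominus> (rho t \<otimes> b \<otimes> b)) * gauss_sum t"
    unfolding gauss_sum_def using t b r by (simp add: char_add sum_distrib_right mult.commute)
  finally show ?thesis .
qed

lemma norm_kern_const:
  assumes "t \<in> carrier R" "t \<noteq> \<zero>"
  shows "cmod (kern_const t) = 1 / q"
proof -
  have "cmod (kern_const t) = (cmod (gauss_sum t))\<^sup>2 / q\<^sup>2"
    using q_pos by (simp add: kern_const_def norm_divide norm_power)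
  then show ?thesis
    using norm_gauss_sum[OF assms] q_pos by (simp add: power2_eq_square)
qed

lemma kernK_eq:
  assumes y: "y \<in> pts2 R" and t: "t \<in> carrier R"
  shows "kernK R e (y, t) = (if t = \<zero> then 0 else kern_const t * kern_phase (rho t) y)"
proof (cases "t = \<zero>")
  case True
  obtain y1 y2 where y12: "y = (y1, y2)" "y1 \<in> carrier R" "y2 \<in> carrier R"
    using y unfolding pts2_def by auto
  have "(\<Sum>a\<in>carrier R. e (c \<otimes> a \<oplus> \<zero> \<otimes> a \<otimes> a)) = (if c = \<zero> then complex_of_real q else 0)"
    if "c \<in> carrier R" for c
    using that by (simp add: sum_char_mult)
  then have "dsigma_check R e (y, t) = delta0 R (y, t)"
    using True y12 q_pos dsigma_check_eq[OF y t] by (simp add: delta0_def power2_eq_square)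
  then show ?thesis
    using True by (simp add: kernK_def)
next
  case False
  obtain y1 y2 where y12: "y = (y1, y2)" "y1 \<in> carrier R" "y2 \<in> carrier R"
    using y unfolding pts2_def by auto
  have "\<ominus> (rho t \<otimes> dot2 R y y) = \<ominus> (rho t \<otimes> y1 \<otimes> y1) \<oplus> \<ominus> (rho t \<otimes> y2 \<otimes> y2)"
    using y12 rho_closed(1)[OF t False] unfolding dot2_def by (simp, algebra)
  then have "kern_phase (rho t) y = e (\<ominus> (rho t \<otimes> y1 \<otimes> y1)) * e (\<ominus> (rho t \<otimes> y2 \<otimes> y2))"
    using y12 rho_closed(1)[OF t False] by (simp add: kern_phase_def char_add)
  moreover have "dsigma_check R e (y, t) = e (\<ominus> (rho t \<otimes> y1 \<otimes> y1)) * gauss_sum t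
      * (e (\<ominus> (rho t \<otimes> y2 \<otimes> y2)) * gauss_sum t) / (complex_of_real q)\<^sup>2"
    using False t y12 dsigma_check_eq[OF y t] by (simp add: quadratic_char_sum)
  ultimately show ?thesis
    using False y12 by (simp add: kernK_def delta0_def kern_const_def power2_eq_square)
qed

lemma conv3_kernK:
  assumes g: "supported_on_plane R g z" and z: "z \<in> carrier R"
    and x: "x \<in> pts2 R" and w: "w \<in> carrier R"
  shows "conv3 R g (kernK R e) (x, w) = (if w = z then 0
      else kern_const (w \<ominus> z) * phase_sum (slice_set R g z) (\<lambda>u. g (u, z)) (rho (w \<ominus> z)) x)"
proof -
  let ?S = "slice_set R g z"
  have "conv3 R g (kernK R e) (x, w) = (\<Sum>y\<in>(\<lambda>u. (u, z)) ` ?S. g y * kernK R e (sub3 R (x, w) y))"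
    unfolding conv3_def
  proof (rule sum.mono_neutral_right)
    show "finite (pts3 R)"
      using finite_carrier by (simp add: pts3_def)
    show "(\<lambda>u. (u, z)) ` ?S \<subseteq> pts3 R"
      using z by (auto simp: slice_set_def pts3_eq)
    show "\<forall>y\<in>pts3 R - (\<lambda>u. (u, z)) ` ?S. g y * kernK R e (sub3 R (x, w) y) = 0"
      using g by (force simp: supported_on_plane_def slice_set_def pts3_eq)
  qed
  also have "\<dots> = (\<Sum>u\<in>?S. g (u, z) * kernK R e (sub2 R x u, w \<ominus> z))"
    by (simp add: sum.reindex inj_on_def sub3_def)
  also have "\<dots> = (\<Sum>u\<in>?S. g (u, z) * (if w = z then 0 else kern_const (w \<ominus> z) * kern_phase (rho (w \<ominus> z)) (sub2 R x u)))"
  proof (rule sum.cong[OF refl])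
    fix u assume "u \<in> ?S"
    then have "sub2 R x u \<in> pts2 R"
      using slice_set_subset x by (blast intro: sub2_closed)
    then show "g (u, z) * kernK R e (sub2 R x u, w \<ominus> z) = g (u, z) * (if w = z then 0
        else kern_const (w \<ominus> z) * kern_phase (rho (w \<ominus> z)) (sub2 R x u))"
      using z w by (simp add: kernK_eq)
  qed
  finally show ?thesis
    by (simp add: phase_sum_def sum_distrib_left mult_ac)
qed

lemma sum_norm_conv3_kernK:
  assumes g: "supported_on_plane R g z" "supported_on_plane R g' z'"
    and z: "z \<in> carrier R" "z' \<in> carrier R" and w: "w \<in> carrier R" "w \<noteq> z" "w \<noteq> z'"
  shows "(\<Sum>x\<in>pts2 R. (cmod (conv3 R g (kernK R e) (x, w)))\<^sup>2 * (cmod (conv3 R g' (kernK R e) (x, w)))\<^sup>2)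
    = (\<Sum>x\<in>pts2 R. (cmod (phase_sum (slice_set R g z) (\<lambda>u. g (u, z)) (rho (w \<ominus> z)) x))\<^sup>2
        * (cmod (phase_sum (slice_set R g' z') (\<lambda>u. g' (u, z')) (rho (w \<ominus> z')) x))\<^sup>2) / q ^ 4"
proof -
  have "w \<ominus> z \<in> carrier R" "w \<ominus> z \<noteq> \<zero>" "w \<ominus> z' \<in> carrier R" "w \<ominus> z' \<noteq> \<zero>"
    using z w by auto
  then have "cmod (kern_const (w \<ominus> z)) = 1 / q" "cmod (kern_const (w \<ominus> z')) = 1 / q"
    by (simp_all add: norm_kern_const)
  moreover have "(a / q)\<^sup>2 * (b / q)\<^sup>2 = a\<^sup>2 * b\<^sup>2 / q ^ 4" for a b :: real
    by (simp add: power_divide power2_eq_square power4_eq_xxxx)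
  ultimately show ?thesis
    using g z w by (simp add: conv3_kernK norm_mult sum_divide_distrib)
qed

lemma L2sq_conv3_kernK:
  assumes g: "supported_on_plane R g z" "supported_on_plane R g' z'"
    and z: "z \<in> carrier R" "z' \<in> carrier R"
  shows "L2sq R (\<lambda>x. conv3 R g (kernK R e) x * conv3 R g' (kernK R e) x)
    = (\<Sum>w\<in>carrier R - {z, z'}. \<Sum>x\<in>pts2 R.
        (cmod (phase_sum (slice_set R g z) (\<lambda>u. g (u, z)) (rho (w \<ominus> z)) x))\<^sup>2
        * (cmod (phase_sum (slice_set R g' z') (\<lambda>u. g' (u, z')) (rho (w \<ominus> z')) x))\<^sup>2) / q ^ 4"
proof -
  have "L2sq R (\<lambda>x. conv3 R g (kernK R e) x * conv3 R g' (kernK R e) x)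
    = (\<Sum>w\<in>carrier R - {z, z'}. \<Sum>x\<in>pts2 R.
        (cmod (conv3 R g (kernK R e) (x, w)))\<^sup>2 * (cmod (conv3 R g' (kernK R e) (x, w)))\<^sup>2)"
    unfolding L2sq_mult_eq_sum_slices
    using finite_carrier g z by (intro sum.mono_neutral_right) (auto simp: conv3_kernK)
  then show ?thesis
    using g z by (simp add: sum_norm_conv3_kernK sum_divide_distrib)
qed

lemma sum_kern_phase_product:
  assumes r: "r \<in> carrier R" "r' \<in> carrier R"
    and pts: "u1 \<in> pts2 R" "u2 \<in> pts2 R" "u3 \<in> pts2 R" "u4 \<in> pts2 R"
  shows "(\<Sum>x\<in>pts2 R. kern_phase r (sub2 R x u1) * cnj (kern_phase r (sub2 R x u2))
      * kern_phase r' (sub2 R x u3) * cnj (kern_phase r' (sub2 R x u4)))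
    = (if add2 R (smult2 R r (sub2 R u1 u2)) (smult2 R r' (sub2 R u3 u4)) = (\<zero>, \<zero>)
       then (complex_of_real q)\<^sup>2 * e (r \<otimes> (dot2 R u2 u2 \<ominus> dot2 R u1 u1) \<oplus> r' \<otimes> (dot2 R u4 u4 \<ominus> dot2 R u3 u3))
       else 0)"
proof -
  obtain a1 b1 a2 b2 a3 b3 a4 b4 where
    pt: "u1 = (a1, b1)" "u2 = (a2, b2)" "u3 = (a3, b3)" "u4 = (a4, b4)"
    by (metis prod.exhaust)
  have c: "a1 \<in> carrier R" "b1 \<in> carrier R" "a2 \<in> carrier R" "b2 \<in> carrier R"
      "a3 \<in> carrier R" "b3 \<in> carrier R" "a4 \<in> carrier R" "b4 \<in> carrier R"
    using pts unfolding pt pts2_def by auto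
  let ?l1 = "r \<otimes> (a1 \<ominus> a2) \<oplus> r' \<otimes> (a3 \<ominus> a4)" and ?l2 = "r \<otimes> (b1 \<ominus> b2) \<oplus> r' \<otimes> (b3 \<ominus> b4)"
  let ?c1 = "r \<otimes> (a2 \<otimes> a2 \<ominus> a1 \<otimes> a1) \<oplus> r' \<otimes> (a4 \<otimes> a4 \<ominus> a3 \<otimes> a3)"
  let ?c2 = "r \<otimes> (b2 \<otimes> b2 \<ominus> b1 \<otimes> b1) \<oplus> r' \<otimes> (b4 \<otimes> b4 \<ominus> b3 \<otimes> b3)"
  have l: "?l1 \<oplus> ?l1 \<in> carrier R" "?l2 \<oplus> ?l2 \<in> carrier R" "?c1 \<in> carrier R" "?c2 \<in> carrier R"
    and l': "?l1 \<in> carrier R" "?l2 \<in> carrier R"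
    using r c by simp_all
  have "(\<Sum>x\<in>pts2 R. kern_phase r (sub2 R x u1) * cnj (kern_phase r (sub2 R x u2))
      * kern_phase r' (sub2 R x u3) * cnj (kern_phase r' (sub2 R x u4)))
    = (\<Sum>x\<in>pts2 R. e (fst x \<otimes> (?l1 \<oplus> ?l1) \<oplus> ?c1) * e (snd x \<otimes> (?l2 \<oplus> ?l2) \<oplus> ?c2))"
  proof (rule sum.cong[OF refl])
    fix x assume "x \<in> pts2 R"
    then obtain x1 x2 where x: "x = (x1, x2)" "x1 \<in> carrier R" "x2 \<in> carrier R"
      unfolding pts2_def by auto
    have "kern_phase r (sub2 R x u1) * cnj (kern_phase r (sub2 R x u2))
        * kern_phase r' (sub2 R x u3) * cnj (kern_phase r' (sub2 R x u4))
      = (e (\<ominus> (r \<otimes> ((x1 \<ominus> a1) \<otimes> (x1 \<ominus> a1)))) * cnj (e (\<ominus> (r \<otimes> ((x1 \<ominus> a2) \<otimes> (x1 \<ominus> a2)))))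
        * e (\<ominus> (r' \<otimes> ((x1 \<ominus> a3) \<otimes> (x1 \<ominus> a3)))) * cnj (e (\<ominus> (r' \<otimes> ((x1 \<ominus> a4) \<otimes> (x1 \<ominus> a4))))))
      * (e (\<ominus> (r \<otimes> ((x2 \<ominus> b1) \<otimes> (x2 \<ominus> b1)))) * cnj (e (\<ominus> (r \<otimes> ((x2 \<ominus> b2) \<otimes> (x2 \<ominus> b2)))))
        * e (\<ominus> (r' \<otimes> ((x2 \<ominus> b3) \<otimes> (x2 \<ominus> b3)))) * cnj (e (\<ominus> (r' \<otimes> ((x2 \<ominus> b4) \<otimes> (x2 \<ominus> b4))))))"
      unfolding x pt sub2_def using r c x by (simp add: kern_phase_split mult_ac)
    also have "\<dots> = e (x1 \<otimes> (?l1 \<oplus> ?l1) \<oplus> ?c1) * e (x2 \<otimes> (?l2 \<oplus> ?l2) \<oplus> ?c2)"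
      using r c x by (simp only: char_phase_alternating)
    finally show "kern_phase r (sub2 R x u1) * cnj (kern_phase r (sub2 R x u2))
        * kern_phase r' (sub2 R x u3) * cnj (kern_phase r' (sub2 R x u4))
      = e (fst x \<otimes> (?l1 \<oplus> ?l1) \<oplus> ?c1) * e (snd x \<otimes> (?l2 \<oplus> ?l2) \<oplus> ?c2)"
      unfolding x by simp
  qed
  also have "\<dots> = (\<Sum>t\<in>carrier R. e (t \<otimes> (?l1 \<oplus> ?l1) \<oplus> ?c1)) * (\<Sum>t\<in>carrier R. e (t \<otimes> (?l2 \<oplus> ?l2) \<oplus> ?c2))"
    by (rule sum_pts2_product)
  also have "\<dots> = (if ?l1 = \<zero> \<and> ?l2 = \<zero> then (complex_of_real q)\<^sup>2 * (e ?c1 * e ?c2) else 0)"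
    unfolding sum_char_affine[OF l(1,3)] sum_char_affine[OF l(2,4)]
    using l' by (simp add: add_self_eq_zero_iff power2_eq_square)
  also have "e ?c1 * e ?c2 = e (r \<otimes> (dot2 R u2 u2 \<ominus> dot2 R u1 u1) \<oplus> r' \<otimes> (dot2 R u4 u4 \<ominus> dot2 R u3 u3))"
    unfolding char_add[OF l(3,4), symmetric] pt dot2_def
    using r c by (simp only: add_scaled_differences m_closed fst_conv snd_conv)
  finally show ?thesis
    unfolding pt add2_def smult2_def sub2_def by simp
qed

lemma sum_norm_phase_sum:
  assumes A: "A \<subseteq> pts2 R" and B: "B \<subseteq> pts2 R" and r: "r \<in> carrier R" "r' \<in> carrier R"
  shows "complex_of_real (\<Sum>x\<in>pts2 R. (cmod (phase_sum A a r x))\<^sup>2 * (cmod (phase_sum B b r' x))\<^sup>2)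
    = (complex_of_real q)\<^sup>2 * (\<Sum>(u1, u2, u3, u4)\<in>A \<times> A \<times> B \<times> B.
        a u1 * cnj (a u2) * b u3 * cnj (b u4)
        * (if add2 R (smult2 R r (sub2 R u1 u2)) (smult2 R r' (sub2 R u3 u4)) = (\<zero>, \<zero>)
           then e (r \<otimes> (dot2 R u2 u2 \<ominus> dot2 R u1 u1) \<oplus> r' \<otimes> (dot2 R u4 u4 \<ominus> dot2 R u3 u3)) else 0))"
proof -
  have "complex_of_real (\<Sum>x\<in>pts2 R. (cmod (phase_sum A a r x))\<^sup>2 * (cmod (phase_sum B b r' x))\<^sup>2)
    = (\<Sum>x\<in>pts2 R. \<Sum>(u1, u2, u3, u4)\<in>A \<times> A \<times> B \<times> B. a u1 * cnj (a u2) * b u3 * cnj (b u4)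
        * (kern_phase r (sub2 R x u1) * cnj (kern_phase r (sub2 R x u2))
           * kern_phase r' (sub2 R x u3) * cnj (kern_phase r' (sub2 R x u4))))"
    unfolding of_real_sum phase_sum_def norm_sq_mult_norm_sq_sum by (simp add: mult_ac)
  also have "\<dots> = (\<Sum>(u1, u2, u3, u4)\<in>A \<times> A \<times> B \<times> B. a u1 * cnj (a u2) * b u3 * cnj (b u4)
        * (\<Sum>x\<in>pts2 R. kern_phase r (sub2 R x u1) * cnj (kern_phase r (sub2 R x u2))
           * kern_phase r' (sub2 R x u3) * cnj (kern_phase r' (sub2 R x u4))))"
    by (subst sum.swap) (simp add: split_def sum_distrib_left)
  also have "\<dots> = (\<Sum>(u1, u2, u3, u4)\<in>A \<times> A \<times> B \<times> B. (complex_of_real q)\<^sup>2 * (a u1 * cnj (a u2) * b u3 * cnj (b u4)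
        * (if add2 R (smult2 R r (sub2 R u1 u2)) (smult2 R r' (sub2 R u3 u4)) = (\<zero>, \<zero>)
           then e (r \<otimes> (dot2 R u2 u2 \<ominus> dot2 R u1 u1) \<oplus> r' \<otimes> (dot2 R u4 u4 \<ominus> dot2 R u3 u3)) else 0)))"
  proof -
    have "a u1 * cnj (a u2) * b u3 * cnj (b u4)
        * (\<Sum>x\<in>pts2 R. kern_phase r (sub2 R x u1) * cnj (kern_phase r (sub2 R x u2))
           * kern_phase r' (sub2 R x u3) * cnj (kern_phase r' (sub2 R x u4)))
      = (complex_of_real q)\<^sup>2 * (a u1 * cnj (a u2) * b u3 * cnj (b u4)
        * (if add2 R (smult2 R r (sub2 R u1 u2)) (smult2 R r' (sub2 R u3 u4)) = (\<zero>, \<zero>)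
           then e (r \<otimes> (dot2 R u2 u2 \<ominus> dot2 R u1 u1) \<oplus> r' \<otimes> (dot2 R u4 u4 \<ominus> dot2 R u3 u3)) else 0))"
      if "u1 \<in> A" "u2 \<in> A" "u3 \<in> B" "u4 \<in> B" for u1 u2 u3 u4
    proof -
      have "u1 \<in> pts2 R" "u2 \<in> pts2 R" "u3 \<in> pts2 R" "u4 \<in> pts2 R"
        using that A B by auto
      then show ?thesis
        by (simp add: sum_kern_phase_product[OF r])
    qed
    then show ?thesis
      by (intro sum.cong refl) auto
  qed
  finally show ?thesis
    by (simp add: sum_distrib_left split_def)
qed

section \<open>The trapezoid bound\<close>

lemma rho_combination_eq_zero:
  assumes s: "s \<in> carrier R" "s \<noteq> \<zero>" "s' \<in> carrier R" "s' \<noteq> \<zero>"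
    and ab: "a \<in> carrier R" "b \<in> carrier R" and eq: "rho s \<otimes> a \<oplus> rho s' \<otimes> b = \<zero>"
  shows "s' \<otimes> a \<oplus> s \<otimes> b = \<zero>"
proof -
  note r = rho_closed[OF s(1,2)] rho_closed[OF s(3,4)]
  have "(two \<otimes> two \<otimes> s \<otimes> s') \<otimes> (rho s \<otimes> a \<oplus> rho s' \<otimes> b)
      = (two \<otimes> two \<otimes> s \<otimes> rho s) \<otimes> (s' \<otimes> a) \<oplus> (two \<otimes> two \<otimes> s' \<otimes> rho s') \<otimes> (s \<otimes> b)"
    using s ab r(1,4) two_closed by algebra
  then show ?thesis
    using s ab r by (simp add: eq)
qed

lemma cancels_if_rho_cancels:
  assumes s: "s \<in> carrier R" "s \<noteq> \<zero>" "s' \<in> carrier R" "s' \<noteq> \<zero>"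
    and d: "d \<in> pts2 R" "d' \<in> pts2 R"
    and eq: "add2 R (smult2 R (rho s) d) (smult2 R (rho s') d') = (\<zero>, \<zero>)"
  shows "add2 R (smult2 R s' d) (smult2 R s d') = (\<zero>, \<zero>)"
  using rho_combination_eq_zero[OF s, of "fst d" "fst d'"] rho_combination_eq_zero[OF s, of "snd d" "snd d'"]
    d eq by (auto simp: pts2_def add2_def smult2_def)

lemma sum_norm_phase_sum_le:
  assumes A: "A \<subseteq> pts2 R" and B: "B \<subseteq> pts2 R"
    and ab: "\<And>u. cmod (a u) \<le> 2" "\<And>u. cmod (b u) \<le> 2"
    and s: "s \<in> carrier R" "s \<noteq> \<zero>" "s' \<in> carrier R" "s' \<noteq> \<zero>"
  shows "(\<Sum>x\<in>pts2 R. (cmod (phase_sum A a (rho s) x))\<^sup>2 * (cmod (phase_sum B b (rho s') x))\<^sup>2)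
    \<le> 16 * q\<^sup>2 * (\<Sum>(u1, u2, u3, u4)\<in>A \<times> A \<times> B \<times> B.
        of_bool (add2 R (smult2 R s' (sub2 R u1 u2)) (smult2 R s (sub2 R u3 u4)) = (\<zero>, \<zero>)))"
proof -
  let ?L = "\<lambda>u1 u2 u3 u4. add2 R (smult2 R (rho s) (sub2 R u1 u2)) (smult2 R (rho s') (sub2 R u3 u4))"
  let ?C = "\<lambda>u1 u2 u3 u4. rho s \<otimes> (dot2 R u2 u2 \<ominus> dot2 R u1 u1) \<oplus> rho s' \<otimes> (dot2 R u4 u4 \<ominus> dot2 R u3 u3)"
  have r: "rho s \<in> carrier R" "rho s' \<in> carrier R"
    using rho_closed s by auto
  have term_le: "cmod (a u1 * cnj (a u2) * b u3 * cnj (b u4) * (if ?L u1 u2 u3 u4 = (\<zero>, \<zero>) then e (?C u1 u2 u3 u4) else 0))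
      \<le> 16 * of_bool (add2 R (smult2 R s' (sub2 R u1 u2)) (smult2 R s (sub2 R u3 u4)) = (\<zero>, \<zero>))"
    if "u1 \<in> A" "u2 \<in> A" "u3 \<in> B" "u4 \<in> B" for u1 u2 u3 u4
  proof -
    have u: "u1 \<in> pts2 R" "u2 \<in> pts2 R" "u3 \<in> pts2 R" "u4 \<in> pts2 R"
      using that A B by auto
    have "cmod (a u1 * cnj (a u2) * b u3 * cnj (b u4)) \<le> 2 * 2 * 2 * 2"
      unfolding norm_mult complex_mod_cnj using ab by (intro mult_mono) auto
    moreover have "cmod (e (?C u1 u2 u3 u4)) = 1"
      using u r by (simp add: char_norm pts2_def dot2_def mem_Times_iff)
    moreover have "?L u1 u2 u3 u4 = (\<zero>, \<zero>) \<Longrightarrow> add2 R (smult2 R s' (sub2 R u1 u2)) (smult2 R s (sub2 R u3 u4)) = (\<zero>, \<zero>)"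
      using u by (intro cancels_if_rho_cancels[OF s]) (auto intro: sub2_closed)
    ultimately show ?thesis
      by (auto simp: norm_mult)
  qed
  have "(\<Sum>x\<in>pts2 R. (cmod (phase_sum A a (rho s) x))\<^sup>2 * (cmod (phase_sum B b (rho s') x))\<^sup>2)
      = cmod (complex_of_real (\<Sum>x\<in>pts2 R. (cmod (phase_sum A a (rho s) x))\<^sup>2 * (cmod (phase_sum B b (rho s') x))\<^sup>2))"
    by (simp only: norm_of_real abs_of_nonneg[OF sum_nonneg] zero_le_mult_iff zero_le_power2 simp_thms)
  also have "\<dots> = q\<^sup>2 * cmod (\<Sum>(u1, u2, u3, u4)\<in>A \<times> A \<times> B \<times> B.
        a u1 * cnj (a u2) * b u3 * cnj (b u4) * (if ?L u1 u2 u3 u4 = (\<zero>, \<zero>) then e (?C u1 u2 u3 u4) else 0))"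
    unfolding sum_norm_phase_sum[OF A B r] norm_mult by (simp add: norm_power)
  also have "\<dots> \<le> q\<^sup>2 * (\<Sum>(u1, u2, u3, u4)\<in>A \<times> A \<times> B \<times> B.
        16 * of_bool (add2 R (smult2 R s' (sub2 R u1 u2)) (smult2 R s (sub2 R u3 u4)) = (\<zero>, \<zero>)))"
    using term_le by (intro mult_left_mono order.trans[OF norm_sum sum_mono]) auto
  finally show ?thesis
    by (simp add: sum_distrib_left split_def mult_ac)
qed

lemma L2sq_conv3_le_trapezoids:
  assumes g: "supported_on_plane R g z" "supported_on_plane R g' z'"
    and sim: "sim_one_on_support g" "sim_one_on_support g'"
    and z: "z \<in> carrier R" "z' \<in> carrier R" "z \<noteq> z'"
  defines "A \<equiv> slice_set R g z" and "B \<equiv> slice_set R g' z'"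
  shows "L2sq R (\<lambda>x. conv3 R g (kernK R e) x * conv3 R g' (kernK R e) x)
    \<le> 16 / q\<^sup>2 * (q * real (card A) * real (card B) + real (num_trap R A B))"
proof -
  let ?Q = "A \<times> A \<times> B \<times> B"
  let ?cancel = "\<lambda>w u1 u2 u3 u4. add2 R (smult2 R (w \<ominus> z') (sub2 R u1 u2)) (smult2 R (w \<ominus> z) (sub2 R u3 u4)) = (\<zero>, \<zero>)"
  have AB: "A \<subseteq> pts2 R" "B \<subseteq> pts2 R" "finite A" "finite B"
    unfolding A_def B_def by (simp_all add: slice_set_subset finite_slice_set)
  have "L2sq R (\<lambda>x. conv3 R g (kernK R e) x * conv3 R g' (kernK R e) x)
      \<le> (\<Sum>w\<in>carrier R - {z, z'}. 16 * q\<^sup>2 * (\<Sum>(u1, u2, u3, u4)\<in>?Q. of_bool (?cancel w u1 u2 u3 u4))) / q ^ 4"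
    unfolding L2sq_conv3_kernK[OF g z(1,2), folded A_def B_def]
    using q_pos AB sim z
    by (intro divide_right_mono sum_mono sum_norm_phase_sum_le norm_le_two_if_sim_one) auto
  also have "\<dots> = 16 / q\<^sup>2 * (\<Sum>w\<in>carrier R - {z, z'}. \<Sum>(u1, u2, u3, u4)\<in>?Q. of_bool (?cancel w u1 u2 u3 u4))"
    using q_pos by (simp add: sum_distrib_left[symmetric] power4_eq_xxxx power2_eq_square)
  also have "\<dots> = 16 / q\<^sup>2 * (\<Sum>(u1, u2, u3, u4)\<in>?Q. \<Sum>w\<in>carrier R - {z, z'}. of_bool (?cancel w u1 u2 u3 u4))"
    by (subst sum.swap) (simp add: split_def)
  also have "\<dots> = 16 / q\<^sup>2 * (\<Sum>(u1, u2, u3, u4)\<in>?Q. real (card {w \<in> carrier R - {z, z'}. ?cancel w u1 u2 u3 u4}))"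
    using finite_carrier by (intro arg_cong[where f = "(*) _"] sum.cong refl) (auto simp: sum_of_bool_eq Int_def)
  also have "\<dots> \<le> 16 / q\<^sup>2 * (\<Sum>(u1, u2, u3, u4)\<in>?Q. q * of_bool (u1 = u2 \<and> u3 = u4) + of_bool (is_trapezoid R u1 u2 u3 u4))"
  proof (intro mult_left_mono sum_mono)
    fix Q assume "Q \<in> ?Q"
    then obtain u1 u2 u3 u4 where Q: "Q = (u1, u2, u3, u4)" "u1 \<in> A" "u2 \<in> A" "u3 \<in> B" "u4 \<in> B"
      by blast
    then have "u1 \<in> pts2 R" "u2 \<in> pts2 R" "u3 \<in> pts2 R" "u4 \<in> pts2 R"
      using AB by blast+
    then show "(case Q of (u1, u2, u3, u4) \<Rightarrow> real (card {w \<in> carrier R - {z, z'}. ?cancel w u1 u2 u3 u4}))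
        \<le> (case Q of (u1, u2, u3, u4) \<Rightarrow> q * of_bool (u1 = u2 \<and> u3 = u4) + of_bool (is_trapezoid R u1 u2 u3 u4))"
      using card_cancelling_heights_le[OF z, of "sub2 R u1 u2" "sub2 R u3 u4"] Q(1)
      by (simp add: sub2_closed sub2_eq_zero_iff is_trapezoid_def)
  qed (use q_pos in simp)
  also have "\<dots> = 16 / q\<^sup>2 * (q * (\<Sum>(u1, u2, u3, u4)\<in>?Q. of_bool (u1 = u2 \<and> u3 = u4))
      + (\<Sum>(u1, u2, u3, u4)\<in>?Q. of_bool (is_trapezoid R u1 u2 u3 u4)))"
    by (simp only: sum_distrib_left sum.distrib[symmetric] split_def)
  also have "\<dots> = 16 / q\<^sup>2 * (q * real (card A) * real (card B) + real (num_trap R A B))"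
    using AB by (simp only: sum_of_bool_diagonal sum_of_bool_trapezoid of_nat_mult mult.assoc)
  finally show ?thesis .
qed

section \<open>The rectangle bound\<close>

lemma is_rectangle_if_parallelogram:
  assumes pts: "u1 \<in> pts2 R" "u2 \<in> pts2 R" "u3 \<in> pts2 R" "u4 \<in> pts2 R"
    and par: "parallelogram u1 u2 u3 u4" and defect: "norm_defect u1 u2 u3 u4 = \<zero>"
  shows "is_rectangle R u1 u2 u3 u4"
proof -
  obtain a1 b1 a2 b2 a3 b3 a4 b4 where
    pt: "u1 = (a1, b1)" "u2 = (a2, b2)" "u3 = (a3, b3)" "u4 = (a4, b4)"
    by (metis prod.exhaust)
  have c: "a1 \<in> carrier R" "b1 \<in> carrier R" "a2 \<in> carrier R" "b2 \<in> carrier R"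
      "a3 \<in> carrier R" "b3 \<in> carrier R" "a4 \<in> carrier R" "b4 \<in> carrier R"
    using pts unfolding pt pts2_def by auto
  have a4: "a4 = a1 \<ominus> a2 \<oplus> a3" and b4: "b4 = b1 \<ominus> b2 \<oplus> b3"
    using par c unfolding pt parallelogram_def add2_def sub2_def
    by (auto intro: eq_of_diff_add_diff_eq_zero)
  define X where "X = (a2 \<ominus> a1) \<otimes> (a3 \<ominus> a2) \<oplus> (b2 \<ominus> b1) \<otimes> (b3 \<ominus> b2)"
  have X: "X \<in> carrier R"
    unfolding X_def using c by simp
  have "norm_defect u1 u2 u3 u4
      = ((a2 \<otimes> a2 \<ominus> a1 \<otimes> a1) \<oplus> (a4 \<otimes> a4 \<ominus> a3 \<otimes> a3)) \<oplus> ((b2 \<otimes> b2 \<ominus> b1 \<otimes> b1) \<oplus> (b4 \<otimes> b4 \<ominus> b3 \<otimes> b3))"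
    unfolding norm_defect_def pt dot2_def using c add_scaled_differences[of \<one> \<one>] by simp
  also have "\<dots> = \<ominus> (X \<oplus> X)"
    unfolding X_def a4 b4 using c
    by (simp add: parallelogram_coordinate_identities(1) minus_double_add_minus_double)
  finally have "norm_defect u1 u2 u3 u4 = \<ominus> (X \<oplus> X)" .
  then have "X \<oplus> X = \<zero>"
    using defect X by (metis add.m_closed minus_minus minus_zero)
  then have X0: "X = \<zero>"
    using X by (simp add: add_self_eq_zero_iff)
  have corners: "(a2 \<ominus> a1) \<otimes> (a3 \<ominus> a2) \<oplus> (b2 \<ominus> b1) \<otimes> (b3 \<ominus> b2) = X"
    "(a3 \<ominus> a2) \<otimes> (a4 \<ominus> a3) \<oplus> (b3 \<ominus> b2) \<otimes> (b4 \<ominus> b3) = \<ominus> X"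
    "(a4 \<ominus> a3) \<otimes> (a1 \<ominus> a4) \<oplus> (b4 \<ominus> b3) \<otimes> (b1 \<ominus> b4) = X"
    "(a1 \<ominus> a4) \<otimes> (a2 \<ominus> a1) \<oplus> (b1 \<ominus> b4) \<otimes> (b2 \<ominus> b1) = \<ominus> X"
    unfolding X_def a4 b4 using c by (simp_all add: parallelogram_coordinate_identities(2-4) minus_add)
  show ?thesis
    unfolding is_rectangle_def is_corner_def dot2_def sub2_def pt using corners X0 by simp
qed

lemma card_parallelograms_le_num_rect:
  assumes "A \<subseteq> pts2 R" "finite A"
  shows "card ((A \<times> A \<times> A \<times> A) \<inter> {(u1, u2, u3, u4). parallelogram u1 u2 u3 u4 \<and> norm_defect u1 u2 u3 u4 = \<zero>})
    \<le> num_rect R A"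
  unfolding num_rect_def
proof (rule card_mono)
  show "finite {(x0, x1, x2, x3). x0 \<in> A \<and> x1 \<in> A \<and> x2 \<in> A \<and> x3 \<in> A \<and> is_rectangle R x0 x1 x2 x3}"
    by (rule finite_subset[of _ "A \<times> A \<times> A \<times> A"]) (use assms in auto)
  show "(A \<times> A \<times> A \<times> A) \<inter> {(u1, u2, u3, u4). parallelogram u1 u2 u3 u4 \<and> norm_defect u1 u2 u3 u4 = \<zero>}
      \<subseteq> {(x0, x1, x2, x3). x0 \<in> A \<and> x1 \<in> A \<and> x2 \<in> A \<and> x3 \<in> A \<and> is_rectangle R x0 x1 x2 x3}"
    using assms(1) by (auto intro: is_rectangle_if_parallelogram)
qed

lemma sum_char_rho_shift:
  assumes z: "z \<in> carrier R" and c: "c \<in> carrier R"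
  shows "(\<Sum>w\<in>carrier R - {z}. e (rho (w \<ominus> z) \<otimes> c)) = complex_of_real q * of_bool (c = \<zero>) - 1"
proof -
  have "(\<Sum>w\<in>carrier R - {z}. e (rho (w \<ominus> z) \<otimes> c)) = (\<Sum>t\<in>carrier R - {\<zero>}. e (t \<otimes> c))"
  proof (rule sum.reindex_bij_witness[of _ "\<lambda>t. rho t \<oplus> z" "\<lambda>w. rho (w \<ominus> z)"])
    fix w assume w: "w \<in> carrier R - {z}"
    then have "w \<ominus> z \<in> carrier R" "w \<ominus> z \<noteq> \<zero>"
      using z by auto
    then show "rho (rho (w \<ominus> z)) \<oplus> z = w" "rho (w \<ominus> z) \<in> carrier R - {\<zero>}"
      using w z rho_closed by (simp_all add: rho_rho a_minus_def a_assoc l_neg r_neg)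
  next
    fix t assume t: "t \<in> carrier R - {\<zero>}"
    then have "rho t \<in> carrier R" "rho t \<noteq> \<zero>"
      using rho_closed by auto
    then show "rho (rho t \<oplus> z \<ominus> z) = t" "rho t \<oplus> z \<in> carrier R - {z}"
      using t z by (simp_all add: rho_rho a_minus_def a_assoc l_neg r_neg)
  qed simp
  also have "\<dots> = (\<Sum>t\<in>carrier R. e (c \<otimes> t)) - e (\<zero> \<otimes> c)"
    using c by (simp add: sum_diff1 finite_carrier m_comm)
  finally show ?thesis
    using c by (cases "c = \<zero>") (simp_all add: sum_char_mult char_zero q_def)
qed

lemma L2sq_conv3_square_eq:
  assumes g: "supported_on_plane R g z" and z: "z \<in> carrier R"
  defines "A \<equiv> slice_set R g z" and "a \<equiv> \<lambda>u. g (u, z)"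
  shows "complex_of_real (L2sq R (\<lambda>x. conv3 R g (kernK R e) x * conv3 R g (kernK R e) x))
    = (complex_of_real q * (\<Sum>(u1, u2, u3, u4)\<in>A \<times> A \<times> A \<times> A. a u1 * cnj (a u2) * a u3 * cnj (a u4)
          * of_bool (parallelogram u1 u2 u3 u4 \<and> norm_defect u1 u2 u3 u4 = \<zero>))
       - (\<Sum>(u1, u2, u3, u4)\<in>A \<times> A \<times> A \<times> A. a u1 * cnj (a u2) * a u3 * cnj (a u4)
          * of_bool (parallelogram u1 u2 u3 u4))) / (complex_of_real q)\<^sup>2"
proof -
  let ?Q = "A \<times> A \<times> A \<times> A"
  define G where "G = (\<lambda>(u1, u2, u3, u4). a u1 * cnj (a u2) * a u3 * cnj (a u4) * of_bool (parallelogram u1 u2 u3 u4))"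
  define D where "D = (\<lambda>(u1, u2, u3, u4). norm_defect u1 u2 u3 u4)"
  have A: "A \<subseteq> pts2 R"
    unfolding A_def by (rule slice_set_subset)
  have D: "D Q \<in> carrier R" if "Q \<in> ?Q" for Q
  proof -
    obtain u1 u2 u3 u4 where "Q = (u1, u2, u3, u4)" "u1 \<in> A" "u2 \<in> A" "u3 \<in> A" "u4 \<in> A"
      using \<open>Q \<in> ?Q\<close> by blast
    then show ?thesis
      unfolding D_def using A by (auto intro: norm_defect_closed)
  qed
  have phase: "(\<Sum>(u1, u2, u3, u4)\<in>?Q. a u1 * cnj (a u2) * a u3 * cnj (a u4)
        * (if add2 R (smult2 R r (sub2 R u1 u2)) (smult2 R r (sub2 R u3 u4)) = (\<zero>, \<zero>)
           then e (r \<otimes> (dot2 R u2 u2 \<ominus> dot2 R u1 u1) \<oplus> r \<otimes> (dot2 R u4 u4 \<ominus> dot2 R u3 u3)) else 0))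
      = (\<Sum>Q\<in>?Q. G Q * e (r \<otimes> D Q))"
    if r: "r \<in> carrier R" "r \<noteq> \<zero>" for r
  proof -
    have "(if add2 R (smult2 R r (sub2 R u1 u2)) (smult2 R r (sub2 R u3 u4)) = (\<zero>, \<zero>)
         then e (r \<otimes> (dot2 R u2 u2 \<ominus> dot2 R u1 u1) \<oplus> r \<otimes> (dot2 R u4 u4 \<ominus> dot2 R u3 u3)) else 0)
      = of_bool (parallelogram u1 u2 u3 u4) * e (r \<otimes> norm_defect u1 u2 u3 u4)"
      if "u1 \<in> A" "u2 \<in> A" "u3 \<in> A" "u4 \<in> A" for u1 u2 u3 u4
    proof -
      have u: "u1 \<in> pts2 R" "u2 \<in> pts2 R" "u3 \<in> pts2 R" "u4 \<in> pts2 R"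
        using that A by auto
      then have "dot2 R u1 u1 \<in> carrier R" "dot2 R u2 u2 \<in> carrier R"
        "dot2 R u3 u3 \<in> carrier R" "dot2 R u4 u4 \<in> carrier R"
        by (auto simp: pts2_def dot2_def)
      then show ?thesis
        using r u by (simp add: add2_smult2_eq_zero_iff sub2_closed parallelogram_def norm_defect_def r_distr)
    qed
    then show ?thesis
      unfolding G_def D_def by (intro sum.cong refl) auto
  qed
  have "complex_of_real (L2sq R (\<lambda>x. conv3 R g (kernK R e) x * conv3 R g (kernK R e) x))
    = (\<Sum>w\<in>carrier R - {z}. complex_of_real (\<Sum>x\<in>pts2 R.
        (cmod (phase_sum A a (rho (w \<ominus> z)) x))\<^sup>2 * (cmod (phase_sum A a (rho (w \<ominus> z)) x))\<^sup>2))
      / (complex_of_real q) ^ 4"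
    unfolding L2sq_conv3_kernK[OF g g z z, folded A_def a_def] by (simp add: of_real_sum)
  also have "\<dots> = (\<Sum>w\<in>carrier R - {z}. (complex_of_real q)\<^sup>2 * (\<Sum>Q\<in>?Q. G Q * e (rho (w \<ominus> z) \<otimes> D Q)))
      / (complex_of_real q) ^ 4"
  proof (rule arg_cong[where f = "\<lambda>s. s / _"], rule sum.cong[OF refl])
    fix w assume "w \<in> carrier R - {z}"
    then have r: "rho (w \<ominus> z) \<in> carrier R" "rho (w \<ominus> z) \<noteq> \<zero>"
      using z rho_closed by auto
    show "complex_of_real (\<Sum>x\<in>pts2 R.
        (cmod (phase_sum A a (rho (w \<ominus> z)) x))\<^sup>2 * (cmod (phase_sum A a (rho (w \<ominus> z)) x))\<^sup>2)
      = (complex_of_real q)\<^sup>2 * (\<Sum>Q\<in>?Q. G Q * e (rho (w \<ominus> z) \<otimes> D Q))"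
      unfolding sum_norm_phase_sum[OF A A r(1) r(1)] phase[OF r] ..
  qed
  also have "\<dots> = (\<Sum>Q\<in>?Q. G Q * (\<Sum>w\<in>carrier R - {z}. e (rho (w \<ominus> z) \<otimes> D Q))) / (complex_of_real q)\<^sup>2"
  proof -
    have "(\<Sum>w\<in>carrier R - {z}. \<Sum>Q\<in>?Q. G Q * e (rho (w \<ominus> z) \<otimes> D Q))
        = (\<Sum>Q\<in>?Q. G Q * (\<Sum>w\<in>carrier R - {z}. e (rho (w \<ominus> z) \<otimes> D Q)))"
      by (subst sum.swap) (simp add: sum_distrib_left)
    then show ?thesis
      using q_pos by (simp add: sum_distrib_left[symmetric] power4_eq_xxxx power2_eq_square)
  qed
  also have "\<dots> = (\<Sum>Q\<in>?Q. G Q * (complex_of_real q * of_bool (D Q = \<zero>) - 1)) / (complex_of_real q)\<^sup>2"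
    using D z by (simp add: sum_char_rho_shift)
  also have "\<dots> = (complex_of_real q * (\<Sum>Q\<in>?Q. G Q * of_bool (D Q = \<zero>)) - (\<Sum>Q\<in>?Q. G Q)) / (complex_of_real q)\<^sup>2"
    by (simp add: sum_distrib_left sum_subtractf[symmetric] algebra_simps)
  finally show ?thesis
    unfolding G_def D_def by (simp only: split_def of_bool_conj mult.assoc)
qed

text \<open>The subtracted parallelogram term is a fourth moment, so dropping it leaves only
  the rectangles.\<close>

lemma L2sq_conv3_square_le_rectangles:
  assumes g: "supported_on_plane R g z" and sim: "sim_one_on_support g" and z: "z \<in> carrier R"
  shows "L2sq R (\<lambda>x. conv3 R g (kernK R e) x * conv3 R g (kernK R e) x) \<le> 16 / q * real (num_rect R (slice_set R g z))"
proof -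
  define A where "A = slice_set R g z"
  define a where "a = (\<lambda>u. g (u, z))"
  define L where "L = L2sq R (\<lambda>x. conv3 R g (kernK R e) x * conv3 R g (kernK R e) x)"
  define X where "X = (\<Sum>(u1, u2, u3, u4)\<in>A \<times> A \<times> A \<times> A. a u1 * cnj (a u2) * a u3 * cnj (a u4)
      * of_bool (parallelogram u1 u2 u3 u4 \<and> norm_defect u1 u2 u3 u4 = \<zero>))"
  define y where "y = (\<Sum>\<xi>\<in>pts2 R. (cmod (fourier_coeff A a \<xi>))\<^sup>2 * (cmod (fourier_coeff A a \<xi>))\<^sup>2) / q\<^sup>2"
  have A: "A \<subseteq> pts2 R" "finite A"
    unfolding A_def by (simp_all add: slice_set_subset finite_slice_set)
  have "y \<ge> 0"
    unfolding y_def by (simp add: sum_nonneg)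
  have "complex_of_real L = (complex_of_real q * X - complex_of_real y) / (complex_of_real q)\<^sup>2"
    unfolding L_def X_def y_def A_def a_def
    using L2sq_conv3_square_eq[OF g z] sum_parallelograms_eq_fourth_moment[OF slice_set_subset] by simp
  then have "complex_of_real (L * q\<^sup>2 + y) = complex_of_real q * X"
    using q_pos by (simp add: field_simps)
  then have "Re (complex_of_real (L * q\<^sup>2 + y)) = Re (complex_of_real q * X)"
    by (rule arg_cong)
  then have "L * q\<^sup>2 + y = q * Re X"
    by simp
  moreover have "q * Re X \<le> q * cmod X"
    using q_pos complex_Re_le_cmod[of X] by simp
  ultimately have "q * (L * q) \<le> q * cmod X"
    using \<open>y \<ge> 0\<close> by (simp add: power2_eq_square mult_ac)
  then have "L \<le> cmod X / q"
    using q_pos by (simp add: pos_le_divide_eq)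
  also have "cmod X \<le> (\<Sum>(u1, u2, u3, u4)\<in>A \<times> A \<times> A \<times> A. 16 * of_bool (parallelogram u1 u2 u3 u4 \<and> norm_defect u1 u2 u3 u4 = \<zero>))"
  proof -
    have "cmod (a u1 * cnj (a u2) * a u3 * cnj (a u4) * of_bool P) \<le> 16 * of_bool P" for u1 u2 u3 u4 P
    proof -
      have "cmod (a u1 * cnj (a u2) * a u3 * cnj (a u4)) \<le> 2 * 2 * 2 * 2"
        unfolding norm_mult complex_mod_cnj a_def using sim
        by (intro mult_mono norm_le_two_if_sim_one) auto
      then show ?thesis
        by (simp add: norm_mult)
    qed
    then show ?thesis
      unfolding X_def by (intro order.trans[OF norm_sum sum_mono]) (simp add: split_def)
  qed
  also have "\<dots> \<le> 16 * real (num_rect R A)"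
    using card_parallelograms_le_num_rect[OF A] A by (simp add: sum_distrib_left[symmetric] split_def sum_of_bool_quadruples)
  finally show ?thesis
    using q_pos unfolding L_def A_def by (simp add: divide_right_mono)
qed

lemma L2sq_conv3_le_rectangles:
  assumes g: "supported_on_plane R g z" "supported_on_plane R g' z'"
    and sim: "sim_one_on_support g" "sim_one_on_support g'"
    and z: "z \<in> carrier R" "z' \<in> carrier R"
  shows "L2sq R (\<lambda>x. conv3 R g (kernK R e) x * conv3 R g' (kernK R e) x)
    \<le> 16 / q * sqrt (real (num_rect R (slice_set R g z)) * real (num_rect R (slice_set R g' z')))"
proof -
  have "L2sq R (\<lambda>x. conv3 R g (kernK R e) x * conv3 R g' (kernK R e) x)
      \<le> sqrt ((16 / q * real (num_rect R (slice_set R g z))) * (16 / q * real (num_rect R (slice_set R g' z'))))"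
    using L2sq_conv3_square_le_rectangles[OF g(1) sim(1) z(1)] L2sq_conv3_square_le_rectangles[OF g(2) sim(2) z(2)] q_pos
    by (intro order.trans[OF L2sq_mult_le] real_sqrt_le_mono mult_mono) (auto simp: L2sq_def sum_nonneg)
  also have "\<dots> = sqrt ((16 / q)\<^sup>2 * (real (num_rect R (slice_set R g z)) * real (num_rect R (slice_set R g' z'))))"
    by (simp add: power2_eq_square mult_ac)
  also have "\<dots> = 16 / q * sqrt (real (num_rect R (slice_set R g z)) * real (num_rect R (slice_set R g' z')))"
    using q_pos by (simp only: real_sqrt_mult real_sqrt_abs abs_of_pos zero_less_divide_iff zero_less_numeral simp_thms)
  finally show ?thesis .
qed

lemma L2sq_conv3_le:
  assumes g: "supported_on_plane R g z" "supported_on_plane R g' z'"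
    and sim: "sim_one_on_support g" "sim_one_on_support g'"
    and z: "z \<in> carrier R" "z' \<in> carrier R" "z \<noteq> z'"
  defines "A \<equiv> slice_set R g z" and "B \<equiv> slice_set R g' z'"
  shows "L2sq R (\<lambda>x. conv3 R g (kernK R e) x * conv3 R g' (kernK R e) x)
    \<le> 16 * (real (card A) * real (card B) / q + Bquant R A B / q\<^sup>2)"
proof -
  let ?L = "L2sq R (\<lambda>x. conv3 R g (kernK R e) x * conv3 R g' (kernK R e) x)"
  have "?L \<le> 16 * (real (card A) * real (card B) / q + real (num_trap R A B) / q\<^sup>2)"
    using L2sq_conv3_le_trapezoids[OF g sim z, folded A_def B_def] q_pos
    by (simp add: field_simps power2_eq_square)
  moreover have "?L \<le> 16 * (real (card A) * real (card B) / q
      + real (card (carrier R)) * sqrt (real (num_rect R A) * real (num_rect R B)) / q\<^sup>2)"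
  proof -
    have "?L \<le> 16 * (real (card (carrier R)) * sqrt (real (num_rect R A) * real (num_rect R B)) / q\<^sup>2)"
      using L2sq_conv3_le_rectangles[OF g sim z(1,2), folded A_def B_def] q_pos
      by (simp add: q_def[symmetric] power2_eq_square)
    also have "\<dots> \<le> 16 * (real (card A) * real (card B) / q
        + real (card (carrier R)) * sqrt (real (num_rect R A) * real (num_rect R B)) / q\<^sup>2)"
      using q_pos by simp
    finally show ?thesis .
  qed
  ultimately show ?thesis
    unfolding Bquant_def by (simp add: min_def)
qed

end

theorem lemma3p2:
  "\<exists>C::real. \<forall>(R::nat ring) e z z' gz gz'.
     field R \<and> finite (carrier R) \<and> odd (ring_char R) \<and>
     \<not> (\<exists>x\<in>carrier R. x \<otimes>\<^bsub>R\<^esub> x = \<ominus>\<^bsub>R\<^esub> \<one>\<^bsub>R\<^esub>) \<and>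
     nontrivial_character R e \<and>
     z \<in> carrier R \<and> z' \<in> carrier R \<and> z \<noteq> z' \<and>
     supported_on_plane R gz z \<and> supported_on_plane R gz' z' \<and>
     sim_one_on_support gz \<and> sim_one_on_support gz'
     \<longrightarrow>
     L2sq R (\<lambda>x. conv3 R gz (kernK R e) x * conv3 R gz' (kernK R e) x)
       \<le> C * (real (card (slice_set R gz z)) * real (card (slice_set R gz' z'))
                / real (card (carrier R))
              + Bquant R (slice_set R gz z) (slice_set R gz' z') / (real (card (carrier R)))^2)"
proof (intro exI[of _ 16] allI impI, elim conjE)
  fix R :: "nat ring" and e z z' gz gz'
  assume "field R" "finite (carrier R)" "odd (ring_char R)" "nontrivial_character R e"
    and z: "z \<in> carrier R" "z' \<in> carrier R" "z \<noteq> z'"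
    and g: "supported_on_plane R gz z" "supported_on_plane R gz' z'"
    and sim: "sim_one_on_support gz" "sim_one_on_support gz'"
  then interpret odd_finite_field_character R e
    by (intro odd_finite_field_character.intro finite_field_character.intro
        odd_finite_field_character_axioms.intro finite_field_character_axioms.intro
        one_plus_one_neq_zero field.axioms(1) domain.axioms(1)) (auto intro: field.axioms)
  show "L2sq R (\<lambda>x. conv3 R gz (kernK R e) x * conv3 R gz' (kernK R e) x)
       \<le> 16 * (real (card (slice_set R gz z)) * real (card (slice_set R gz' z')) / real (card (carrier R))
              + Bquant R (slice_set R gz z) (slice_set R gz' z') / (real (card (carrier R)))\<^sup>2)"
    using L2sq_conv3_le[OF g sim z] by (simp add: q_def)
qed

end
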